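(* Let $T$ and $S$ be bounded, linear, positive operators on $L^2(G,\mathbb{C}^{s\times r})$ that are adjointable with respect to the matrix-valued inner product, and let $\{E_k\}_{k\in\mathbb{N}}$ be a matrix-valued orthonormal basis for $L^2(G,\mathbb{C}^{s\times r})$. Let $I$ be the identity operator. Then: (1) $\{(I+T)E_k\}_{k\in\mathbb{N}}$ and $\{(I+S)E_k\}_{k\in\mathbb{N}}$ are matrix-valued Riesz bases for $L^2(G,\mathbb{C}^{s\times r})$; (2) $\{(I+T+S)E_k\}_{k\in\mathbb{N}}$ is a matrix-valued Riesz basis for $L^2(G,\mathbb{C}^{s\times r})$; (3) if $TS=ST$, then $\{(I+TS)E_k\}_{k\in\mathbb{N}}$ is a matrix-valued Riesz basis for $L^2(G,\mathbb{C}^{s\times r})$.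
   Context: $G$ is a locally compact abelian group that is metrizable and $\sigma$-compact, with Haar measure $\mu_G$; $s,r\in\mathbb{N}$. $L^2(G,\mathbb{C}^{s\times r})$ is the space of $s\times r$ matrices $\mathbf{f}=[f_{ij}]$ with all entries in $L^2(G)$. The matrix-valued inner product is $\langle \mathbf{f},\mathbf{g}\rangle=\int_G \mathbf{f}(x)\mathbf{g}^*(x)\,d\mu_G\in M_s(\mathbb{C})$ (entrywise integral). $L^2(G,\mathbb{C}^{s\times r})$ is a Hilbert space with inner product $\langle \mathbf{f},\mathbf{g}\rangle_{L^2}=\mathrm{tr}\langle \mathbf{f},\mathbf{g}\rangle$ and Frobenius norm $\|\mathbf{f}\|=(\sum_{i,j}\int_G|f_{ij}|^2d\mu_G)^{1/2}$; $U^*$ denotes the Hilbert-adjoint of a bounded operator $U$ with respect to this inner product. $U$ is adjointable with respect to the matrix-valued inner product if $\langle U\mathbf{f},\mathbf{g}\rangle=\langle\mathbf{f},U^*\mathbf{g}\rangle$ for all $\mathbf{f},\mathbf{g}$. A bounded operator $T$ is positive if it is self-adjoint ($T^*=T$) and $\mathrm{tr}\langle T\mathbf{f},\mathbf{f}\rangle\ge0$ for all $\mathbf{f}$. A matrix-valued orthonormal basis is a sequence $\{E_k\}_{k\in\mathbb{N}}\subset L^2(G,\mathbb{C}^{s\times r})$ with $\langle E_k,E_j\rangle=\mathbf{I}_{s\times s}$ if $k=j$ and $\mathbf{O}_{s\times s}$ if $k\neq j$, such that every $\mathbf{f}$ satisfies $\mathbf{f}=\sum_k\langle\mathbf{f},E_k\rangle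 E_k$ with convergence in the Frobenius norm. A matrix-valued Riesz basis is a family of the form $\{UE_k\}_{k\in\mathbb{N}}$ where $\{E_k\}$ is a matrix-valued orthonormal basis and $U$ is a bounded, linear, bijective operator on $L^2(G,\mathbb{C}^{s\times r})$ that is adjointable with respect to the matrix-valued inner product. *)

theory Defs
  imports "HOL-Analysis.Analysis"
begin

definition lca_group :: "'g::{ab_group_add, metric_space} itself \<Rightarrow> bool" where
  "lca_group _ \<longleftrightarrow>
     continuous_on UNIV (\<lambda>p::'g \<times> 'g. fst p + snd p) \<and>
     continuous_on UNIV (\<lambda>x::'g. - x) \<and>
     locally_compact_space (euclidean :: 'g topology) \<and>
     (\<exists>K::nat \<Rightarrow> 'g set. (\<forall>n. compact (K n)) \<and> (\<Union>n. K n) = UNIV)"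

text \<open>A Haar measure on G: a Borel measure, translation invariant, finite on compact
  sets and positive on nonempty open sets (regularity is automatic on a metrizable
  sigma-compact space).\<close>
definition haar_measure :: "'g::{ab_group_add, metric_space} measure \<Rightarrow> bool" where
  "haar_measure M \<longleftrightarrow>
     sets M = sets borel \<and>
     (\<forall>a A. A \<in> sets borel \<longrightarrow> emeasure M ((\<lambda>x. a + x) ` A) = emeasure M A) \<and>
     (\<forall>K. compact K \<longrightarrow> emeasure M K < \<infinity>) \<and>
     (\<forall>U. open U \<and> U \<noteq> {} \<longrightarrow> emeasure M U > 0)"

text \<open>s x r complex matrices are represented as \<open>complex^'r^'s\<close>; the norm of this type
  is the Frobenius norm.\<close>

definition cadj :: "complex^'r^'s \<Rightarrow> complex^'s^'r" where
  "cadj A = (\<chi> i j. cnj (A $ j $ i))"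

definition L2 :: "'g measure \<Rightarrow> ('g \<Rightarrow> complex^'r^'s) set" where
  "L2 M = {f. f \<in> borel_measurable M \<and> integrable M (\<lambda>x. (norm (f x))\<^sup>2)}"

definition mip :: "'g measure \<Rightarrow> ('g \<Rightarrow> complex^'r^'s) \<Rightarrow> ('g \<Rightarrow> complex^'r^'s) \<Rightarrow> complex^'s^'s" where
  "mip M f g = (\<chi> i k. integral\<^sup>L M (\<lambda>x. (f x ** cadj (g x)) $ i $ k))"

definition ip :: "'g measure \<Rightarrow> ('g \<Rightarrow> complex^'r^'s) \<Rightarrow> ('g \<Rightarrow> complex^'r^'s) \<Rightarrow> complex" where
  "ip M f g = trace (mip M f g)"

definition L2norm :: "'g measure \<Rightarrow> ('g \<Rightarrow> complex^'r^'s) \<Rightarrow> real" where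
  "L2norm M f = sqrt (integral\<^sup>L M (\<lambda>x. (norm (f x))\<^sup>2))"

text \<open>Elements of L^2 are equivalence classes: equality means a.e. equality.\<close>
definition aeq :: "'g measure \<Rightarrow> ('g \<Rightarrow> complex^'r^'s) \<Rightarrow> ('g \<Rightarrow> complex^'r^'s) \<Rightarrow> bool" where
  "aeq M f g \<longleftrightarrow> (AE x in M. f x = g x)"

definition csmult :: "complex \<Rightarrow> complex^'r^'s \<Rightarrow> complex^'r^'s" where
  "csmult c A = (\<chi> i j. c * A $ i $ j)"


definition bounded_linear_op :: "'g measure \<Rightarrow> (('g \<Rightarrow> complex^'r::finite^'s::finite) \<Rightarrow> ('g \<Rightarrow> complex^'r^'s)) \<Rightarrow> bool" where
  "bounded_linear_op M U \<longleftrightarrow>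
     (\<forall>f \<in> L2 M. U f \<in> L2 M) \<and>
     (\<forall>f \<in> L2 M. \<forall>g \<in> L2 M. aeq M (U (\<lambda>x. f x + g x)) (\<lambda>x. U f x + U g x)) \<and>
     (\<forall>f \<in> L2 M. \<forall>c. aeq M (U (\<lambda>x. csmult c (f x))) (\<lambda>x. csmult c (U f x))) \<and>
     (\<exists>C. \<forall>f \<in> L2 M. L2norm M (U f) \<le> C * L2norm M f)"

definition bijective_op :: "'g measure \<Rightarrow> (('g \<Rightarrow> complex^'r::finite^'s::finite) \<Rightarrow> ('g \<Rightarrow> complex^'r^'s)) \<Rightarrow> bool" where
  "bijective_op M U \<longleftrightarrow>
     (\<forall>f \<in> L2 M. \<forall>g \<in> L2 M. aeq M (U f) (U g) \<longrightarrow> aeq M f g) \<and>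
     (\<forall>g \<in> L2 M. \<exists>f \<in> L2 M. aeq M (U f) g)"

definition adjointable :: "'g measure \<Rightarrow> (('g \<Rightarrow> complex^'r::finite^'s::finite) \<Rightarrow> ('g \<Rightarrow> complex^'r^'s)) \<Rightarrow> bool" where
  "adjointable M U \<longleftrightarrow>
     (\<exists>V. (\<forall>g \<in> L2 M. V g \<in> L2 M) \<and>
          (\<forall>f \<in> L2 M. \<forall>g \<in> L2 M. mip M (U f) g = mip M f (V g)))"

definition positive_op :: "'g measure \<Rightarrow> (('g \<Rightarrow> complex^'r::finite^'s::finite) \<Rightarrow> ('g \<Rightarrow> complex^'r^'s)) \<Rightarrow> bool" where
  "positive_op M T \<longleftrightarrow>
     (\<forall>f \<in> L2 M. \<forall>g \<in> L2 M. ip M (T f) g = ip M f (T g)) \<and>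
     (\<forall>f \<in> L2 M. ip M (T f) f \<in> \<real> \<and> Re (ip M (T f) f) \<ge> 0)"

definition mv_onb :: "'g measure \<Rightarrow> (nat \<Rightarrow> 'g \<Rightarrow> complex^'r^'s) \<Rightarrow> bool" where
  "mv_onb M E \<longleftrightarrow>
     (\<forall>k. E k \<in> L2 M) \<and>
     (\<forall>k j. mip M (E k) (E j) = (if k = j then mat 1 else 0)) \<and>
     (\<forall>f \<in> L2 M. (\<lambda>n. L2norm M (\<lambda>x. f x - (\<Sum>k<n. mip M f (E k) ** E k x))) \<longlonglongrightarrow> 0)"

definition mv_riesz_basis :: "'g measure \<Rightarrow> (nat \<Rightarrow> 'g \<Rightarrow> complex^'r^'s) \<Rightarrow> bool" where
  "mv_riesz_basis M F \<longleftrightarrow>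
     (\<exists>E U. mv_onb M E \<and> bounded_linear_op M U \<and> bijective_op M U \<and> adjointable M U \<and>
            (\<forall>k. aeq M (F k) (U (E k))))"

end

(*
  L^2(G, C^{s x r}) is a real Hilbert space for the inner product Re tr<f, g>, and in it every
  operator A that is positive in the sense of the statement is accretive: <A f, f> >= 0.
  For a bounded accretive A, the operator I + A is injective because <(I + A) f, f> >= ||f||^2,
  and surjective because for t = 1 / (1 + ||A||^2) the map f |-> (1 - t) f - t A f + t g is a
  contraction (with constant sqrt (1 - t)), whose fixed point, which exists by completeness of
  L^2, solves (I + A) f = g. Adjointability and boundedness pass to sums and products, so
  (I + A) E_k is a Riesz basis whenever A is bounded, adjointable and accretive. This settles
  A = T, S and T + S.

  For commuting positive T and S, accretivity of T S is proved without square roots. Let C bound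
  T, P_0 = T / C and P_(n+1) = P_n - P_n^2. Every P_n satisfies 0 <= P_n <= I and commutes with
  S; the sum of the ||P_n f||^2 is at most ||f||^2, so P_n f --> 0, while <S P_n f, f> decreases
  in n and is at least -||S|| ||P_n f|| ||f||. Hence <S T f, f> = C <S P_0 f, f> >= 0.
*)

theory Submission
  imports Defs
begin

lemma borel_measurable_vec_nth [measurable (raw)]:
  "f \<in> borel_measurable M \<Longrightarrow> (\<lambda>x. (f x :: 'b::real_normed_vector^'n) $ i) \<in> borel_measurable M"
  by (rule borel_measurable_continuous_on[OF linear_continuous_on[OF bounded_linear_vec_nth]])

lemma borel_measurable_cnj [measurable (raw)]:
  "f \<in> borel_measurable M \<Longrightarrow> (\<lambda>x. cnj (f x)) \<in> borel_measurable M"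
  by (rule borel_measurable_continuous_on[OF linear_continuous_on[OF bounded_linear_cnj]])

section \<open>Square integrable functions\<close>

definition square_integrable :: "'a measure \<Rightarrow> ('a \<Rightarrow> 'b::euclidean_space) \<Rightarrow> bool" where
  "square_integrable M f \<longleftrightarrow> f \<in> borel_measurable M \<and> integrable M (\<lambda>x. (norm (f x))\<^sup>2)"

definition L2_sqnorm :: "'a measure \<Rightarrow> ('a \<Rightarrow> 'b::euclidean_space) \<Rightarrow> real" where
  "L2_sqnorm M f = integral\<^sup>L M (\<lambda>x. (norm (f x))\<^sup>2)"

definition L2_inner :: "'a measure \<Rightarrow> ('a \<Rightarrow> 'b::euclidean_space) \<Rightarrow> ('a \<Rightarrow> 'b) \<Rightarrow> real" where
  "L2_inner M f g = integral\<^sup>L M (\<lambda>x. inner (f x) (g x))"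

lemma L2_iff_square_integrable: "f \<in> L2 M \<longleftrightarrow> square_integrable M f"
  by (simp add: L2_def square_integrable_def)

lemma L2norm_eq_sqrt_L2_sqnorm: "L2norm M f = sqrt (L2_sqnorm M f)"
  by (simp add: L2norm_def L2_sqnorm_def)

lemma square_integrable_borel_measurable [measurable_dest]:
  "square_integrable M f \<Longrightarrow> f \<in> borel_measurable M"
  by (simp add: square_integrable_def)

lemma L2_sqnorm_nonneg: "0 \<le> L2_sqnorm M f"
  unfolding L2_sqnorm_def by (rule integral_nonneg_AE) auto

lemma nn_integral_eq_L2_sqnorm:
  "square_integrable M f \<Longrightarrow> (\<integral>\<^sup>+x. ennreal ((norm (f x))\<^sup>2) \<partial>M) = ennreal (L2_sqnorm M f)"
  unfolding L2_sqnorm_def by (rule nn_integral_eq_integral) (auto simp: square_integrable_def)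

lemma integrable_norm_mult_norm:
  assumes "square_integrable M f" "square_integrable M g"
  shows "integrable M (\<lambda>x. norm (f x) * norm (g x))"
proof (rule Bochner_Integration.integrable_bound)
  show "integrable M (\<lambda>x. (norm (f x))\<^sup>2 + (norm (g x))\<^sup>2)"
    using assms by (auto simp: square_integrable_def)
  have "norm (f x) * norm (g x) \<le> (norm (f x))\<^sup>2 + (norm (g x))\<^sup>2" for x
  proof -
    have "2 * (norm (f x) * norm (g x)) \<le> (norm (f x))\<^sup>2 + (norm (g x))\<^sup>2"
      using sum_squares_bound[of "norm (f x)" "norm (g x)"] by (simp add: mult.assoc)
    moreover have "0 \<le> norm (f x) * norm (g x)" by simp
    ultimately show ?thesis by linarith
  qed
  then show "AE x in M. norm (norm (f x) * norm (g x)) \<le> norm ((norm (f x))\<^sup>2 + (norm (g x))\<^sup>2)"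
    by simp
qed (use assms in measurable)

lemma integrable_L2_inner:
  assumes "square_integrable M f" "square_integrable M g"
  shows "integrable M (\<lambda>x. inner (f x) (g x))"
  by (rule Bochner_Integration.integrable_bound[OF integrable_norm_mult_norm[OF assms]])
    (use assms in \<open>auto simp: Cauchy_Schwarz_ineq2\<close>)

lemma square_integrable_add:
  assumes "square_integrable M f" "square_integrable M g"
  shows "square_integrable M (\<lambda>x. f x + g x)"
  unfolding square_integrable_def
proof
  show "integrable M (\<lambda>x. (norm (f x + g x))\<^sup>2)"
  proof (rule Bochner_Integration.integrable_bound)
    show "integrable M (\<lambda>x. 2 * (norm (f x))\<^sup>2 + 2 * (norm (g x))\<^sup>2)"
      using assms by (auto simp: square_integrable_def)
    have "(norm (f x + g x))\<^sup>2 \<le> 2 * (norm (f x))\<^sup>2 + 2 * (norm (g x))\<^sup>2" for x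
    proof -
      have "(norm (f x + g x))\<^sup>2 \<le> (norm (f x) + norm (g x))\<^sup>2"
        by (simp add: norm_triangle_ineq power_mono)
      also have "\<dots> \<le> 2 * (norm (f x))\<^sup>2 + 2 * (norm (g x))\<^sup>2"
        using sum_squares_bound[of "norm (f x)" "norm (g x)"] by (simp add: power2_sum)
      finally show ?thesis .
    qed
    then show "AE x in M. norm ((norm (f x + g x))\<^sup>2) \<le> norm (2 * (norm (f x))\<^sup>2 + 2 * (norm (g x))\<^sup>2)"
      by simp
  qed (use assms in measurable)
qed (use assms in measurable)

lemma square_integrable_scaleR:
  "square_integrable M f \<Longrightarrow> square_integrable M (\<lambda>x. c *\<^sub>R f x)"
  unfolding square_integrable_def by (auto simp: power_mult_distrib)

lemma square_integrable_diff:
  assumes "square_integrable M f" "square_integrable M g"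
  shows "square_integrable M (\<lambda>x. f x - g x)"
  using square_integrable_add[OF assms(1) square_integrable_scaleR[OF assms(2), of "-1"]] by simp

lemma square_integrable_zero: "square_integrable M (\<lambda>x. 0)"
  unfolding square_integrable_def by simp

lemma square_integrable_norm:
  "square_integrable M f \<Longrightarrow> square_integrable M (\<lambda>x. norm (f x))"
  unfolding square_integrable_def by auto

lemma L2_inner_self: "L2_inner M f f = L2_sqnorm M f"
  by (simp add: L2_inner_def L2_sqnorm_def power2_norm_eq_inner)

lemma L2_inner_commute: "L2_inner M f g = L2_inner M g f"
  by (simp add: L2_inner_def inner_commute)

lemma L2_inner_add_left:
  assumes "square_integrable M f" "square_integrable M g" "square_integrable M h"
  shows "L2_inner M (\<lambda>x. f x + g x) h = L2_inner M f h + L2_inner M g h"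
  unfolding L2_inner_def inner_add_left
  by (rule Bochner_Integration.integral_add; rule integrable_L2_inner; fact)

lemma L2_inner_diff_left:
  assumes "square_integrable M f" "square_integrable M g" "square_integrable M h"
  shows "L2_inner M (\<lambda>x. f x - g x) h = L2_inner M f h - L2_inner M g h"
  unfolding L2_inner_def inner_diff_left
  by (rule Bochner_Integration.integral_diff; rule integrable_L2_inner; fact)

lemma L2_inner_scaleR_left: "L2_inner M (\<lambda>x. c *\<^sub>R f x) h = c * L2_inner M f h"
  unfolding L2_inner_def by simp

lemma L2_inner_add_right:
  assumes "square_integrable M f" "square_integrable M g" "square_integrable M h"
  shows "L2_inner M h (\<lambda>x. f x + g x) = L2_inner M h f + L2_inner M h g"
  using L2_inner_add_left[OF assms] by (simp add: L2_inner_commute)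

lemma L2_inner_diff_right:
  assumes "square_integrable M f" "square_integrable M g" "square_integrable M h"
  shows "L2_inner M h (\<lambda>x. f x - g x) = L2_inner M h f - L2_inner M h g"
  using L2_inner_diff_left[OF assms] by (simp add: L2_inner_commute)

lemma L2_inner_scaleR_right: "L2_inner M h (\<lambda>x. c *\<^sub>R f x) = c * L2_inner M h f"
  by (metis L2_inner_commute L2_inner_scaleR_left)

lemma L2_sqnorm_scaleR: "L2_sqnorm M (\<lambda>x. c *\<^sub>R f x) = c\<^sup>2 * L2_sqnorm M f"
  by (simp add: L2_sqnorm_def power_mult_distrib)

lemma L2_sqnorm_uminus: "L2_sqnorm M (\<lambda>x. - f x) = L2_sqnorm M f"
  by (simp add: L2_sqnorm_def)

lemma L2_sqnorm_minus_commute: "L2_sqnorm M (\<lambda>x. f x - g x) = L2_sqnorm M (\<lambda>x. g x - f x)"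
  by (simp add: L2_sqnorm_def norm_minus_commute)

lemma L2_sqnorm_add:
  assumes "square_integrable M f" "square_integrable M g"
  shows "L2_sqnorm M (\<lambda>x. f x + g x) = L2_sqnorm M f + 2 * L2_inner M f g + L2_sqnorm M g"
proof -
  have "L2_sqnorm M (\<lambda>x. f x + g x) = L2_inner M (\<lambda>x. f x + g x) (\<lambda>x. f x + g x)"
    by (simp add: L2_inner_self)
  also have "\<dots> = L2_inner M f f + L2_inner M f g + (L2_inner M g f + L2_inner M g g)"
    using assms square_integrable_add[OF assms] by (simp add: L2_inner_add_left L2_inner_add_right)
  finally show ?thesis by (simp add: L2_inner_self L2_inner_commute)
qed

lemma L2_inner_Cauchy_Schwarz:
  assumes "square_integrable M f" "square_integrable M g"
  shows "\<bar>L2_inner M f g\<bar> \<le> sqrt (L2_sqnorm M f) * sqrt (L2_sqnorm M g)"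
proof -
  have [measurable]: "f \<in> borel_measurable M" "g \<in> borel_measurable M"
    using assms by (auto simp: square_integrable_def)
  have int: "integrable M (\<lambda>x. norm (f x) * norm (g x))"
    using integrable_norm_mult_norm[OF assms] .
  have "ennreal ((integral\<^sup>L M (\<lambda>x. norm (f x) * norm (g x)))\<^sup>2)
      = (\<integral>\<^sup>+x. ennreal (norm (f x)) * ennreal (norm (g x)) \<partial>M)\<^sup>2"
    unfolding ennreal_mult[symmetric, OF norm_ge_zero norm_ge_zero]
    by (simp add: nn_integral_eq_integral[OF int] ennreal_power integral_nonneg_AE)
  also have "\<dots> \<le> (\<integral>\<^sup>+x. ennreal (norm (f x)) ^ 2 \<partial>M) * (\<integral>\<^sup>+x. ennreal (norm (g x)) ^ 2 \<partial>M)"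
    by (rule Cauchy_Schwarz_nn_integral) measurable
  also have "\<dots> = ennreal (L2_sqnorm M f * L2_sqnorm M g)"
    using nn_integral_eq_L2_sqnorm[OF assms(1)] nn_integral_eq_L2_sqnorm[OF assms(2)]
    by (simp add: ennreal_power ennreal_mult L2_sqnorm_nonneg)
  finally have "(integral\<^sup>L M (\<lambda>x. norm (f x) * norm (g x)))\<^sup>2 \<le> L2_sqnorm M f * L2_sqnorm M g"
    using L2_sqnorm_nonneg[of M f] L2_sqnorm_nonneg[of M g] by (auto simp add: ennreal_le_iff2)
  then have "integral\<^sup>L M (\<lambda>x. norm (f x) * norm (g x)) \<le> sqrt (L2_sqnorm M f) * sqrt (L2_sqnorm M g)"
    by (metis real_le_rsqrt real_sqrt_mult)
  moreover have "\<bar>L2_inner M f g\<bar> \<le> integral\<^sup>L M (\<lambda>x. norm (f x) * norm (g x))"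
    unfolding L2_inner_def
    by (rule order_trans[OF integral_abs_bound integral_mono[OF _ int]])
      (auto simp: Cauchy_Schwarz_ineq2 intro: integrable_abs integrable_L2_inner[OF assms])
  ultimately show ?thesis by linarith
qed

lemma L2_norm_triangle:
  assumes "square_integrable M f" "square_integrable M g"
  shows "sqrt (L2_sqnorm M (\<lambda>x. f x + g x)) \<le> sqrt (L2_sqnorm M f) + sqrt (L2_sqnorm M g)"
proof -
  have "L2_inner M f g \<le> sqrt (L2_sqnorm M f) * sqrt (L2_sqnorm M g)"
    using L2_inner_Cauchy_Schwarz[OF assms] by (simp add: abs_le_iff)
  then have "L2_sqnorm M (\<lambda>x. f x + g x)
      \<le> L2_sqnorm M f + 2 * (sqrt (L2_sqnorm M f) * sqrt (L2_sqnorm M g)) + L2_sqnorm M g"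
    unfolding L2_sqnorm_add[OF assms] by linarith
  also have "\<dots> = (sqrt (L2_sqnorm M f) + sqrt (L2_sqnorm M g))\<^sup>2"
    by (simp add: power2_sum L2_sqnorm_nonneg)
  finally show ?thesis
    by (intro real_le_lsqrt) (simp_all add: L2_sqnorm_nonneg)
qed

lemma L2_dist_triangle:
  assumes "square_integrable M f" "square_integrable M g" "square_integrable M h"
  shows "sqrt (L2_sqnorm M (\<lambda>x. f x - h x))
    \<le> sqrt (L2_sqnorm M (\<lambda>x. f x - g x)) + sqrt (L2_sqnorm M (\<lambda>x. g x - h x))"
  using L2_norm_triangle[OF square_integrable_diff[OF assms(1,2)] square_integrable_diff[OF assms(2,3)]]
  by simp

lemma L2_sqnorm_eq_0_iff:
  assumes "square_integrable M f"
  shows "L2_sqnorm M f = 0 \<longleftrightarrow> (AE x in M. f x = 0)"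
proof -
  have "L2_sqnorm M f = 0 \<longleftrightarrow> (AE x in M. (norm (f x))\<^sup>2 = 0)"
    unfolding L2_sqnorm_def
    by (rule integral_nonneg_eq_0_iff_AE) (use assms in \<open>auto simp: square_integrable_def\<close>)
  then show ?thesis by simp
qed

section \<open>The trace inner product\<close>

lemma mmult_cadj_nth:
  "((A::complex^'r^'s) ** cadj (B::complex^'r^'t)) $ i $ k = (\<Sum>j\<in>UNIV. A $ i $ j * cnj (B $ k $ j))"
  by (simp add: matrix_matrix_mult_def cadj_def)

lemma integrable_mip_nth:
  fixes f g :: "'a \<Rightarrow> complex^'r^'s"
  assumes "square_integrable M f" "square_integrable M g"
  shows "integrable M (\<lambda>x. (f x ** cadj (g x)) $ i $ k)"
  unfolding mmult_cadj_nth
proof (rule Bochner_Integration.integrable_sum)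
  fix j
  have "norm (f x $ i $ j * cnj (g x $ k $ j)) \<le> norm (f x) * norm (g x)" for x
    unfolding norm_mult complex_mod_cnj
    by (intro mult_mono order_trans[OF Finite_Cartesian_Product.norm_nth_le
          Finite_Cartesian_Product.norm_nth_le]) auto
  then show "integrable M (\<lambda>x. f x $ i $ j * cnj (g x $ k $ j))"
    by (intro Bochner_Integration.integrable_bound[OF integrable_norm_mult_norm[OF assms]] AE_I2)
      (use assms in auto)
qed

lemma inner_vec_eq_trace: "inner (A::complex^'r^'s) B = (\<Sum>i\<in>UNIV. Re ((A ** cadj B) $ i $ i))"
  unfolding inner_vec_def inner_complex_def mmult_cadj_nth Re_sum by simp

lemma Re_ip_eq_L2_inner:
  fixes f g :: "'a \<Rightarrow> complex^'r^'s"
  assumes "square_integrable M f" "square_integrable M g"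
  shows "Re (ip M f g) = L2_inner M f g"
proof -
  have "Re (ip M f g) = (\<Sum>i\<in>UNIV. Re (integral\<^sup>L M (\<lambda>x. (f x ** cadj (g x)) $ i $ i)))"
    unfolding ip_def mip_def trace_def Re_sum by simp
  also have "\<dots> = (\<Sum>i\<in>UNIV. integral\<^sup>L M (\<lambda>x. Re ((f x ** cadj (g x)) $ i $ i)))"
    using integrable_mip_nth[OF assms] by (simp add: integral_Re)
  also have "\<dots> = integral\<^sup>L M (\<lambda>x. \<Sum>i\<in>UNIV. Re ((f x ** cadj (g x)) $ i $ i))"
    using integrable_mip_nth[OF assms] by (simp add: Bochner_Integration.integral_sum)
  also have "\<dots> = L2_inner M f g"
    unfolding L2_inner_def inner_vec_eq_trace ..
  finally show ?thesis .
qed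

lemma mip_add_left:
  fixes f g h :: "'a \<Rightarrow> complex^'r::finite^'s::finite"
  assumes "square_integrable M f" "square_integrable M g" "square_integrable M h"
  shows "mip M (\<lambda>x. f x + g x) h = mip M f h + mip M g h"
proof -
  have "((f x + g x) ** cadj (h x)) $ i $ k = (f x ** cadj (h x)) $ i $ k + (g x ** cadj (h x)) $ i $ k"
    for x i k
    unfolding mmult_cadj_nth by (simp add: sum.distrib distrib_right)
  then show ?thesis
    using integrable_mip_nth[OF assms(1,3)] integrable_mip_nth[OF assms(2,3)]
    by (simp add: mip_def vec_eq_iff)
qed

lemma mip_add_right:
  fixes f g h :: "'a \<Rightarrow> complex^'r::finite^'s::finite"
  assumes "square_integrable M f" "square_integrable M g" "square_integrable M h"
  shows "mip M h (\<lambda>x. f x + g x) = mip M h f + mip M h g"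
proof -
  have "(h x ** cadj (f x + g x)) $ i $ k = (h x ** cadj (f x)) $ i $ k + (h x ** cadj (g x)) $ i $ k"
    for x i k
    unfolding mmult_cadj_nth by (simp add: sum.distrib distrib_left)
  then show ?thesis
    using integrable_mip_nth[OF assms(3,1)] integrable_mip_nth[OF assms(3,2)]
    by (simp add: mip_def vec_eq_iff)
qed

lemma csmult_add: "csmult c (A + B) = csmult c A + csmult c B"
  by (simp add: csmult_def vec_eq_iff distrib_left)

lemma csmult_of_real: "csmult (complex_of_real a) A = a *\<^sub>R A"
proof -
  have "(a *\<^sub>R A) $ i $ j = complex_of_real a * A $ i $ j" for i j
    using scaleR_conv_of_real[of a "A $ i $ j"] by simp
  then show ?thesis unfolding csmult_def vec_eq_iff by simp
qed

lemma csmult_scaleR: "csmult c (a *\<^sub>R A) = a *\<^sub>R csmult c A"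
  by (simp add: csmult_def vec_eq_iff scaleR_conv_of_real)

lemma norm_csmult: "norm (csmult c (A::complex^'r^'s)) = cmod c * norm A"
proof -
  have "norm (csmult c A $ i) = cmod c * norm (A $ i)" for i
    unfolding norm_vec_def csmult_def by (simp add: norm_mult L2_set_right_distrib)
  then show ?thesis
    unfolding norm_vec_def[of "csmult c A"] by (simp add: L2_set_right_distrib norm_vec_def)
qed

lemma borel_measurable_csmult [measurable (raw)]:
  "f \<in> borel_measurable M \<Longrightarrow> (\<lambda>x. csmult c (f x :: complex^'r^'s)) \<in> borel_measurable M"
proof -
  have "bounded_linear (\<lambda>A::complex^'r^'s. csmult c A)"
    by (rule bounded_linear_intro[where K="cmod c"]) (auto simp: csmult_add csmult_scaleR norm_csmult)
  then show "f \<in> borel_measurable M \<Longrightarrow> ?thesis"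
    by (rule borel_measurable_continuous_on[OF linear_continuous_on])
qed

lemma square_integrable_csmult:
  fixes f :: "'a \<Rightarrow> complex^'r^'s"
  shows "square_integrable M f \<Longrightarrow> square_integrable M (\<lambda>x. csmult c (f x))"
  unfolding square_integrable_def by (auto simp: norm_csmult power_mult_distrib)

lemma aeq_refl: "aeq M f f"
  by (simp add: aeq_def)

lemma aeq_sym: "aeq M f g \<Longrightarrow> aeq M g f"
  by (simp add: aeq_def eq_commute)

lemma aeq_trans: "aeq M f g \<Longrightarrow> aeq M g h \<Longrightarrow> aeq M f h"
  unfolding aeq_def by (auto elim: eventually_rev_mp)

lemma L2_inner_aeq_left:
  assumes "square_integrable M f" "square_integrable M f'" "square_integrable M h" "aeq M f f'"
  shows "L2_inner M f h = L2_inner M f' h"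
  unfolding L2_inner_def
  by (rule integral_cong_AE) (use assms in \<open>auto simp: aeq_def elim: eventually_mono\<close>)

lemma L2_inner_aeq_right:
  assumes "square_integrable M f" "square_integrable M f'" "square_integrable M h" "aeq M f f'"
  shows "L2_inner M h f = L2_inner M h f'"
  using L2_inner_aeq_left[OF assms] by (simp add: L2_inner_commute)

lemma L2_sqnorm_aeq:
  assumes "square_integrable M f" "square_integrable M f'" "aeq M f f'"
  shows "L2_sqnorm M f = L2_sqnorm M f'"
  using L2_inner_aeq_left[OF assms(1,2,1,3)] L2_inner_aeq_right[OF assms(1,2,2,3)]
  by (simp add: L2_inner_self)

section \<open>Bounded real-linear operators on square integrable functions\<close>

definition bounded_rlinear_op ::
    "'a measure \<Rightarrow> (('a \<Rightarrow> complex^'r::finite^'s::finite) \<Rightarrow> ('a \<Rightarrow> complex^'r^'s)) \<Rightarrow> bool" where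
  "bounded_rlinear_op M B \<longleftrightarrow>
     (\<forall>f. square_integrable M f \<longrightarrow> square_integrable M (B f)) \<and>
     (\<forall>f g. square_integrable M f \<longrightarrow> square_integrable M g \<longrightarrow>
        aeq M (B (\<lambda>x. f x + g x)) (\<lambda>x. B f x + B g x)) \<and>
     (\<forall>f a. square_integrable M f \<longrightarrow> aeq M (B (\<lambda>x. a *\<^sub>R f x)) (\<lambda>x. a *\<^sub>R B f x)) \<and>
     (\<exists>C. \<forall>f. square_integrable M f \<longrightarrow> sqrt (L2_sqnorm M (B f)) \<le> C * sqrt (L2_sqnorm M f))"

definition symmetric_op ::
    "'a measure \<Rightarrow> (('a \<Rightarrow> complex^'r::finite^'s::finite) \<Rightarrow> ('a \<Rightarrow> complex^'r^'s)) \<Rightarrow> bool" where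
  "symmetric_op M B \<longleftrightarrow> (\<forall>f g. square_integrable M f \<longrightarrow> square_integrable M g \<longrightarrow>
     L2_inner M (B f) g = L2_inner M f (B g))"

definition accretive_op ::
    "'a measure \<Rightarrow> (('a \<Rightarrow> complex^'r::finite^'s::finite) \<Rightarrow> ('a \<Rightarrow> complex^'r^'s)) \<Rightarrow> bool" where
  "accretive_op M B \<longleftrightarrow> (\<forall>f. square_integrable M f \<longrightarrow> 0 \<le> L2_inner M (B f) f)"

lemma bounded_linear_op_imp_rlinear:
  assumes "bounded_linear_op M A"
  shows "bounded_rlinear_op M A"
  using assms
  unfolding bounded_linear_op_def bounded_rlinear_op_def Ball_def L2_iff_square_integrable
    L2norm_eq_sqrt_L2_sqnorm csmult_of_real[symmetric]
  by blast

context
  fixes M :: "'a measure" and B :: "('a \<Rightarrow> complex^'r::finite^'s::finite) \<Rightarrow> ('a \<Rightarrow> complex^'r^'s)"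
  assumes B: "bounded_rlinear_op M B"
begin

lemma bounded_rlinear_op_square_integrable:
  "square_integrable M f \<Longrightarrow> square_integrable M (B f)"
  using B by (simp add: bounded_rlinear_op_def)

lemma bounded_rlinear_op_add:
  "square_integrable M f \<Longrightarrow> square_integrable M g \<Longrightarrow> aeq M (B (\<lambda>x. f x + g x)) (\<lambda>x. B f x + B g x)"
  using B by (simp add: bounded_rlinear_op_def)

lemma bounded_rlinear_op_scaleR:
  "square_integrable M f \<Longrightarrow> aeq M (B (\<lambda>x. a *\<^sub>R f x)) (\<lambda>x. a *\<^sub>R B f x)"
  using B by (simp add: bounded_rlinear_op_def)

lemma bounded_rlinear_op_bound:
  obtains C where "C > 0"
    "\<And>f. square_integrable M f \<Longrightarrow> sqrt (L2_sqnorm M (B f)) \<le> C * sqrt (L2_sqnorm M f)"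
proof -
  obtain C where C: "\<And>f. square_integrable M f \<Longrightarrow> sqrt (L2_sqnorm M (B f)) \<le> C * sqrt (L2_sqnorm M f)"
    using B by (auto simp: bounded_rlinear_op_def)
  have "sqrt (L2_sqnorm M (B f)) \<le> max C 1 * sqrt (L2_sqnorm M f)" if "square_integrable M f" for f
    using order_trans[OF C[OF that] mult_right_mono[of C "max C 1" "sqrt (L2_sqnorm M f)"]]
    by (simp add: L2_sqnorm_nonneg)
  then show ?thesis by (intro that[of "max C 1"]) auto
qed

lemma bounded_rlinear_op_diff:
  assumes "square_integrable M f" "square_integrable M g"
  shows "aeq M (B (\<lambda>x. f x - g x)) (\<lambda>x. B f x - B g x)"
proof -
  have "aeq M (B (\<lambda>x. (f x - g x) + g x)) (\<lambda>x. B (\<lambda>x. f x - g x) x + B g x)"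
    using bounded_rlinear_op_add[OF square_integrable_diff[OF assms] assms(2)] .
  then show ?thesis unfolding aeq_def by (auto elim: eventually_mono)
qed

lemma bounded_rlinear_op_cong:
  assumes f: "square_integrable M f" and g: "square_integrable M g" and "aeq M f g"
  shows "aeq M (B f) (B g)"
proof -
  obtain C where C: "\<And>f. square_integrable M f \<Longrightarrow> sqrt (L2_sqnorm M (B f)) \<le> C * sqrt (L2_sqnorm M f)"
    using bounded_rlinear_op_bound by blast
  have fg: "square_integrable M (\<lambda>x. f x - g x)" using square_integrable_diff[OF f g] .
  have "L2_sqnorm M (\<lambda>x. f x - g x) = 0"
    using \<open>aeq M f g\<close> by (simp add: L2_sqnorm_eq_0_iff[OF fg] aeq_def)
  then have "L2_sqnorm M (B (\<lambda>x. f x - g x)) = 0"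
    using C[OF fg] L2_sqnorm_nonneg[of M "B (\<lambda>x. f x - g x)"] by simp
  then have "AE x in M. B (\<lambda>x. f x - g x) x = 0"
    using L2_sqnorm_eq_0_iff[OF bounded_rlinear_op_square_integrable[OF fg]] by simp
  with bounded_rlinear_op_diff[OF f g] show ?thesis
    unfolding aeq_def by eventually_elim simp
qed

end

lemma bounded_rlinear_op_lincomb:
  assumes A: "bounded_rlinear_op M A"
  shows "bounded_rlinear_op M (\<lambda>f x. a *\<^sub>R f x + b *\<^sub>R A f x)"
proof -
  obtain C where C: "\<And>f. square_integrable M f \<Longrightarrow> sqrt (L2_sqnorm M (A f)) \<le> C * sqrt (L2_sqnorm M f)"
    using bounded_rlinear_op_bound[OF A] by blast
  have "sqrt (L2_sqnorm M (\<lambda>x. a *\<^sub>R f x + b *\<^sub>R A f x)) \<le> (\<bar>a\<bar> + \<bar>b\<bar> * C) * sqrt (L2_sqnorm M f)"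
    if f: "square_integrable M f" for f
  proof -
    have Af: "square_integrable M (A f)" using bounded_rlinear_op_square_integrable[OF A f] .
    have "sqrt (L2_sqnorm M (\<lambda>x. a *\<^sub>R f x + b *\<^sub>R A f x))
        \<le> \<bar>a\<bar> * sqrt (L2_sqnorm M f) + \<bar>b\<bar> * sqrt (L2_sqnorm M (A f))"
      using L2_norm_triangle[OF square_integrable_scaleR[OF f] square_integrable_scaleR[OF Af]]
      by (simp add: L2_sqnorm_scaleR real_sqrt_mult)
    also have "\<dots> \<le> \<bar>a\<bar> * sqrt (L2_sqnorm M f) + \<bar>b\<bar> * (C * sqrt (L2_sqnorm M f))"
      using C[OF f] by (intro add_left_mono mult_left_mono) auto
    finally show ?thesis by (simp add: algebra_simps)
  qed
  moreover have "aeq M (\<lambda>x. a *\<^sub>R (f x + g x) + b *\<^sub>R A (\<lambda>x. f x + g x) x)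
      (\<lambda>x. (a *\<^sub>R f x + b *\<^sub>R A f x) + (a *\<^sub>R g x + b *\<^sub>R A g x))"
    if "square_integrable M f" "square_integrable M g" for f g
    using bounded_rlinear_op_add[OF A that] unfolding aeq_def
    by (rule eventually_mono) (simp add: algebra_simps)
  moreover have "aeq M (\<lambda>x. a *\<^sub>R (r *\<^sub>R f x) + b *\<^sub>R A (\<lambda>x. r *\<^sub>R f x) x)
      (\<lambda>x. r *\<^sub>R (a *\<^sub>R f x + b *\<^sub>R A f x))" if "square_integrable M f" for f r
    using bounded_rlinear_op_scaleR[OF A that, of r] unfolding aeq_def
    by (rule eventually_mono) (simp add: algebra_simps)
  moreover have "square_integrable M (\<lambda>x. a *\<^sub>R f x + b *\<^sub>R A f x)" if "square_integrable M f" for f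
    using that
    by (intro square_integrable_add square_integrable_scaleR bounded_rlinear_op_square_integrable[OF A])
  ultimately show ?thesis
    unfolding bounded_rlinear_op_def by (auto simp: scaleR_add_right)
qed

lemma bounded_rlinear_op_comp:
  assumes A: "bounded_rlinear_op M A" and B: "bounded_rlinear_op M B"
  shows "bounded_rlinear_op M (\<lambda>f. A (B f))"
proof -
  note A_sq = bounded_rlinear_op_square_integrable[OF A]
    and B_sq = bounded_rlinear_op_square_integrable[OF B]
  obtain CA where CA: "CA > 0"
    "\<And>f. square_integrable M f \<Longrightarrow> sqrt (L2_sqnorm M (A f)) \<le> CA * sqrt (L2_sqnorm M f)"
    using bounded_rlinear_op_bound[OF A] by blast
  obtain CB where CB:
    "\<And>f. square_integrable M f \<Longrightarrow> sqrt (L2_sqnorm M (B f)) \<le> CB * sqrt (L2_sqnorm M f)"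
    using bounded_rlinear_op_bound[OF B] by blast
  have "aeq M (A (B (\<lambda>x. f x + g x))) (\<lambda>x. A (B f) x + A (B g) x)"
    if f: "square_integrable M f" and g: "square_integrable M g" for f g
    using bounded_rlinear_op_cong[OF A B_sq[OF square_integrable_add[OF f g]]
        square_integrable_add[OF B_sq[OF f] B_sq[OF g]] bounded_rlinear_op_add[OF B f g]]
      bounded_rlinear_op_add[OF A B_sq[OF f] B_sq[OF g]]
    by (rule aeq_trans)
  moreover have "aeq M (A (B (\<lambda>x. a *\<^sub>R f x))) (\<lambda>x. a *\<^sub>R A (B f) x)"
    if f: "square_integrable M f" for f a
    using bounded_rlinear_op_cong[OF A B_sq[OF square_integrable_scaleR[OF f]]
        square_integrable_scaleR[OF B_sq[OF f]] bounded_rlinear_op_scaleR[OF B f]]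
      bounded_rlinear_op_scaleR[OF A B_sq[OF f]]
    by (rule aeq_trans)
  moreover have "sqrt (L2_sqnorm M (A (B f))) \<le> (CA * CB) * sqrt (L2_sqnorm M f)"
    if f: "square_integrable M f" for f
    using order_trans[OF CA(2)[OF B_sq[OF f]] mult_left_mono[OF CB[OF f], of CA]] CA(1)
    by (simp add: mult.assoc)
  ultimately show ?thesis
    unfolding bounded_rlinear_op_def using A_sq B_sq by blast
qed

lemma bounded_rlinear_op_diff_ops:
  assumes A: "bounded_rlinear_op M A" and B: "bounded_rlinear_op M B"
  shows "bounded_rlinear_op M (\<lambda>f x. A f x - B f x)"
proof -
  note A_sq = bounded_rlinear_op_square_integrable[OF A]
    and B_sq = bounded_rlinear_op_square_integrable[OF B]
  obtain CA where CA:
    "\<And>f. square_integrable M f \<Longrightarrow> sqrt (L2_sqnorm M (A f)) \<le> CA * sqrt (L2_sqnorm M f)"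
    using bounded_rlinear_op_bound[OF A] by blast
  obtain CB where CB:
    "\<And>f. square_integrable M f \<Longrightarrow> sqrt (L2_sqnorm M (B f)) \<le> CB * sqrt (L2_sqnorm M f)"
    using bounded_rlinear_op_bound[OF B] by blast
  have "aeq M (\<lambda>x. A (\<lambda>x. f x + g x) x - B (\<lambda>x. f x + g x) x) (\<lambda>x. (A f x - B f x) + (A g x - B g x))"
    if "square_integrable M f" "square_integrable M g" for f g
    using bounded_rlinear_op_add[OF A that] bounded_rlinear_op_add[OF B that] unfolding aeq_def
    by eventually_elim (simp add: algebra_simps)
  moreover have "aeq M (\<lambda>x. A (\<lambda>x. a *\<^sub>R f x) x - B (\<lambda>x. a *\<^sub>R f x) x) (\<lambda>x. a *\<^sub>R (A f x - B f x))"
    if "square_integrable M f" for f a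
    using bounded_rlinear_op_scaleR[OF A that, of a] bounded_rlinear_op_scaleR[OF B that, of a]
    unfolding aeq_def by eventually_elim (simp add: algebra_simps)
  moreover have "sqrt (L2_sqnorm M (\<lambda>x. A f x - B f x)) \<le> (CA + CB) * sqrt (L2_sqnorm M f)"
    if f: "square_integrable M f" for f
  proof -
    have "sqrt (L2_sqnorm M (\<lambda>x. A f x - B f x)) \<le> sqrt (L2_sqnorm M (A f)) + sqrt (L2_sqnorm M (B f))"
      using L2_norm_triangle[OF A_sq[OF f] square_integrable_scaleR[OF B_sq[OF f], of "-1"]]
      by (simp add: L2_sqnorm_uminus)
    also have "\<dots> \<le> (CA + CB) * sqrt (L2_sqnorm M f)"
      using CA[OF f] CB[OF f] by (simp add: algebra_simps)
    finally show ?thesis .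
  qed
  moreover have "square_integrable M (\<lambda>x. A f x - B f x)" if "square_integrable M f" for f
    using square_integrable_diff[OF A_sq[OF that] B_sq[OF that]] .
  ultimately show ?thesis
    unfolding bounded_rlinear_op_def by blast
qed

lemma bounded_linear_op_id: "bounded_linear_op M (\<lambda>f. f)"
  unfolding bounded_linear_op_def by (intro conjI ballI allI exI[of _ 1]) (simp_all add: aeq_refl)

lemma bounded_linear_op_add:
  assumes T: "bounded_linear_op M T" and S: "bounded_linear_op M S"
  shows "bounded_linear_op M (\<lambda>f x. T f x + S f x)"
proof -
  obtain CT where CT: "\<And>f. f \<in> L2 M \<Longrightarrow> L2norm M (T f) \<le> CT * L2norm M f"
    using T unfolding bounded_linear_op_def by blast
  obtain CS where CS: "\<And>f. f \<in> L2 M \<Longrightarrow> L2norm M (S f) \<le> CS * L2norm M f"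
    using S unfolding bounded_linear_op_def by blast
  have TL: "T f \<in> L2 M" and SL: "S f \<in> L2 M" if "f \<in> L2 M" for f
    using T S that by (auto simp: bounded_linear_op_def)
  have "(\<lambda>x. T f x + S f x) \<in> L2 M" if "f \<in> L2 M" for f
    using square_integrable_add TL[OF that] SL[OF that] by (simp add: L2_iff_square_integrable)
  moreover have "L2norm M (\<lambda>x. T f x + S f x) \<le> (CT + CS) * L2norm M f" if f: "f \<in> L2 M" for f
    using L2_norm_triangle[of M "T f" "S f"] TL[OF f] SL[OF f] CT[OF f] CS[OF f]
    by (simp add: L2_iff_square_integrable L2norm_eq_sqrt_L2_sqnorm algebra_simps)
  moreover have "aeq M (\<lambda>x. T (\<lambda>x. f x + g x) x + S (\<lambda>x. f x + g x) x)
      (\<lambda>x. (T f x + S f x) + (T g x + S g x))" if "f \<in> L2 M" "g \<in> L2 M" for f g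
  proof -
    have "aeq M (T (\<lambda>x. f x + g x)) (\<lambda>x. T f x + T g x)"
      "aeq M (S (\<lambda>x. f x + g x)) (\<lambda>x. S f x + S g x)"
      using T S that by (auto simp: bounded_linear_op_def)
    then show ?thesis unfolding aeq_def by eventually_elim (simp add: algebra_simps)
  qed
  moreover have "aeq M (\<lambda>x. T (\<lambda>x. csmult c (f x)) x + S (\<lambda>x. csmult c (f x)) x)
      (\<lambda>x. csmult c (T f x + S f x))" if "f \<in> L2 M" for f c
  proof -
    have "aeq M (T (\<lambda>x. csmult c (f x))) (\<lambda>x. csmult c (T f x))"
      "aeq M (S (\<lambda>x. csmult c (f x))) (\<lambda>x. csmult c (S f x))"
      using T S that by (auto simp: bounded_linear_op_def)
    then show ?thesis unfolding aeq_def by eventually_elim (simp add: csmult_add)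
  qed
  ultimately show ?thesis
    unfolding bounded_linear_op_def by blast
qed

lemma bounded_linear_op_comp:
  assumes T: "bounded_linear_op M T" and S: "bounded_linear_op M S"
  shows "bounded_linear_op M (\<lambda>f. T (S f))"
proof -
  have RT: "bounded_rlinear_op M T" and RS: "bounded_rlinear_op M S"
    using T S by (auto intro: bounded_linear_op_imp_rlinear)
  have R: "bounded_rlinear_op M (\<lambda>f. T (S f))"
    using bounded_rlinear_op_comp[OF RT RS] .
  have "aeq M (T (S (\<lambda>x. csmult c (f x)))) (\<lambda>x. csmult c (T (S f) x))" if fL: "f \<in> L2 M" for f c
  proof -
    have f: "square_integrable M f" using fL by (simp add: L2_iff_square_integrable)
    have S_csmult: "aeq M (S (\<lambda>x. csmult c (f x))) (\<lambda>x. csmult c (S f x))" and SfL: "S f \<in> L2 M"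
      using S fL by (auto simp: bounded_linear_op_def)
    have T_csmult: "aeq M (T (\<lambda>x. csmult c (S f x))) (\<lambda>x. csmult c (T (S f) x))"
      using T SfL by (simp add: bounded_linear_op_def)
    have "aeq M (T (S (\<lambda>x. csmult c (f x)))) (T (\<lambda>x. csmult c (S f x)))"
      by (rule bounded_rlinear_op_cong[OF RT
            bounded_rlinear_op_square_integrable[OF RS square_integrable_csmult[OF f]]
            square_integrable_csmult[OF bounded_rlinear_op_square_integrable[OF RS f]] S_csmult])
    then show ?thesis using T_csmult by (rule aeq_trans)
  qed
  moreover obtain C where
    "\<And>f. square_integrable M f \<Longrightarrow> sqrt (L2_sqnorm M (T (S f))) \<le> C * sqrt (L2_sqnorm M f)"
    using bounded_rlinear_op_bound[OF R] by blast
  ultimately show ?thesis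
    unfolding bounded_linear_op_def L2norm_eq_sqrt_L2_sqnorm
    using bounded_rlinear_op_square_integrable[OF R] bounded_rlinear_op_add[OF R]
    by (intro conjI ballI allI exI[of _ C]) (auto simp: L2_iff_square_integrable)
qed

lemma adjointable_id: "adjointable M (\<lambda>f. f)"
  unfolding adjointable_def by (intro exI[of _ "\<lambda>g. g"]) simp

lemma adjointable_add:
  assumes T: "adjointable M T" "\<And>f. f \<in> L2 M \<Longrightarrow> T f \<in> L2 M"
    and S: "adjointable M S" "\<And>f. f \<in> L2 M \<Longrightarrow> S f \<in> L2 M"
  shows "adjointable M (\<lambda>f x. T f x + S f x)"
proof -
  obtain V where V: "\<forall>g\<in>L2 M. V g \<in> L2 M" "\<forall>f\<in>L2 M. \<forall>g\<in>L2 M. mip M (T f) g = mip M f (V g)"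
    using T(1) by (auto simp: adjointable_def)
  obtain W where W: "\<forall>g\<in>L2 M. W g \<in> L2 M" "\<forall>f\<in>L2 M. \<forall>g\<in>L2 M. mip M (S f) g = mip M f (W g)"
    using S(1) by (auto simp: adjointable_def)
  have "mip M (\<lambda>x. T f x + S f x) g = mip M f (\<lambda>x. V g x + W g x)" if f: "f \<in> L2 M" and g: "g \<in> L2 M" for f g
  proof -
    have "mip M (\<lambda>x. T f x + S f x) g = mip M (T f) g + mip M (S f) g"
      using mip_add_left[of M "T f" "S f" g] T(2)[OF f] S(2)[OF f] g by (simp add: L2_iff_square_integrable)
    also have "\<dots> = mip M f (V g) + mip M f (W g)"
      using V(2) W(2) f g by simp
    also have "\<dots> = mip M f (\<lambda>x. V g x + W g x)"
      using mip_add_right[of M "V g" "W g" f] V(1) W(1) f g by (simp add: L2_iff_square_integrable)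
    finally show ?thesis .
  qed
  moreover have "(\<lambda>x. V g x + W g x) \<in> L2 M" if "g \<in> L2 M" for g
    using V(1) W(1) that by (simp add: L2_iff_square_integrable square_integrable_add)
  ultimately show ?thesis
    unfolding adjointable_def by (intro exI[of _ "\<lambda>g x. V g x + W g x"]) blast
qed

lemma adjointable_comp:
  assumes T: "adjointable M T" and S: "adjointable M S" "\<And>f. f \<in> L2 M \<Longrightarrow> S f \<in> L2 M"
  shows "adjointable M (\<lambda>f. T (S f))"
proof -
  obtain V where V: "\<forall>g\<in>L2 M. V g \<in> L2 M" "\<forall>f\<in>L2 M. \<forall>g\<in>L2 M. mip M (T f) g = mip M f (V g)"
    using T by (auto simp: adjointable_def)
  obtain W where W: "\<forall>g\<in>L2 M. W g \<in> L2 M" "\<forall>f\<in>L2 M. \<forall>g\<in>L2 M. mip M (S f) g = mip M f (W g)"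
    using S(1) by (auto simp: adjointable_def)
  show ?thesis
    unfolding adjointable_def using V W S(2) by (intro exI[of _ "\<lambda>g. W (V g)"]) simp
qed

lemma positive_op_imp_symmetric:
  fixes T :: "('a \<Rightarrow> complex^'r::finite^'s::finite) \<Rightarrow> ('a \<Rightarrow> complex^'r^'s)"
  assumes "bounded_linear_op M T" "positive_op M T"
  shows "symmetric_op M T"
  unfolding symmetric_op_def
proof (intro allI impI)
  fix f g :: "'a \<Rightarrow> complex^'r^'s"
  assume f: "square_integrable M f" and g: "square_integrable M g"
  note T_sq = bounded_rlinear_op_square_integrable[OF bounded_linear_op_imp_rlinear[OF assms(1)]]
  have "ip M (T f) g = ip M f (T g)"
    using conjunct1[OF assms(2)[unfolded positive_op_def]] f g by (simp add: L2_iff_square_integrable)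
  then show "L2_inner M (T f) g = L2_inner M f (T g)"
    using Re_ip_eq_L2_inner[OF T_sq[OF f] g] Re_ip_eq_L2_inner[OF f T_sq[OF g]] by simp
qed

lemma positive_op_imp_accretive:
  fixes T :: "('a \<Rightarrow> complex^'r::finite^'s::finite) \<Rightarrow> ('a \<Rightarrow> complex^'r^'s)"
  assumes "bounded_linear_op M T" "positive_op M T"
  shows "accretive_op M T"
  unfolding accretive_op_def
proof (intro allI impI)
  fix f :: "'a \<Rightarrow> complex^'r^'s"
  assume f: "square_integrable M f"
  note T_sq = bounded_rlinear_op_square_integrable[OF bounded_linear_op_imp_rlinear[OF assms(1)]]
  have "0 \<le> Re (ip M (T f) f)"
    using conjunct2[OF assms(2)[unfolded positive_op_def]] f by (simp add: L2_iff_square_integrable)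
  then show "0 \<le> L2_inner M (T f) f"
    using Re_ip_eq_L2_inner[OF T_sq[OF f] f] by simp
qed

lemma symmetric_op_scaleR:
  "symmetric_op M A \<Longrightarrow> symmetric_op M (\<lambda>f x. c *\<^sub>R A f x)"
  by (simp add: symmetric_op_def L2_inner_scaleR_left L2_inner_scaleR_right)

lemma symmetric_op_diff:
  fixes A B :: "('a \<Rightarrow> complex^'r::finite^'s::finite) \<Rightarrow> ('a \<Rightarrow> complex^'r^'s)"
  assumes A: "bounded_rlinear_op M A" "symmetric_op M A" and B: "bounded_rlinear_op M B" "symmetric_op M B"
  shows "symmetric_op M (\<lambda>f x. A f x - B f x)"
  unfolding symmetric_op_def
proof (intro allI impI)
  fix f g :: "'a \<Rightarrow> complex^'r^'s"
  assume f: "square_integrable M f" and g: "square_integrable M g"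
  note A_sq = bounded_rlinear_op_square_integrable[OF A(1)]
    and B_sq = bounded_rlinear_op_square_integrable[OF B(1)]
  have "L2_inner M (\<lambda>x. A f x - B f x) g = L2_inner M (A f) g - L2_inner M (B f) g"
    using L2_inner_diff_left[OF A_sq[OF f] B_sq[OF f] g] .
  also have "\<dots> = L2_inner M f (A g) - L2_inner M f (B g)"
    using A(2)[unfolded symmetric_op_def, rule_format, OF f g]
      B(2)[unfolded symmetric_op_def, rule_format, OF f g] by simp
  also have "\<dots> = L2_inner M f (\<lambda>x. A g x - B g x)"
    using L2_inner_diff_right[OF A_sq[OF g] B_sq[OF g] f] by simp
  finally show "L2_inner M (\<lambda>x. A f x - B f x) g = L2_inner M f (\<lambda>x. A g x - B g x)" .
qed

lemma symmetric_op_comp: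
  fixes A B :: "('a \<Rightarrow> complex^'r::finite^'s::finite) \<Rightarrow> ('a \<Rightarrow> complex^'r^'s)"
  assumes A: "bounded_rlinear_op M A" "symmetric_op M A" and B: "bounded_rlinear_op M B" "symmetric_op M B"
    and comm: "\<And>f. square_integrable M f \<Longrightarrow> aeq M (A (B f)) (B (A f))"
  shows "symmetric_op M (\<lambda>f. A (B f))"
  unfolding symmetric_op_def
proof (intro allI impI)
  fix f g :: "'a \<Rightarrow> complex^'r^'s"
  assume f: "square_integrable M f" and g: "square_integrable M g"
  note A_sq = bounded_rlinear_op_square_integrable[OF A(1)]
    and B_sq = bounded_rlinear_op_square_integrable[OF B(1)]
  have "L2_inner M (A (B f)) g = L2_inner M f (B (A g))"
    using A(2) B(2) f g A_sq B_sq by (simp add: symmetric_op_def)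
  also have "\<dots> = L2_inner M f (A (B g))"
    using L2_inner_aeq_right[OF B_sq[OF A_sq[OF g]] A_sq[OF B_sq[OF g]] f aeq_sym[OF comm[OF g]]] .
  finally show "L2_inner M (A (B f)) g = L2_inner M f (A (B g))" .
qed

lemma accretive_op_add:
  fixes A B :: "('a \<Rightarrow> complex^'r::finite^'s::finite) \<Rightarrow> ('a \<Rightarrow> complex^'r^'s)"
  assumes A: "bounded_rlinear_op M A" "accretive_op M A" and B: "bounded_rlinear_op M B" "accretive_op M B"
  shows "accretive_op M (\<lambda>f x. A f x + B f x)"
  unfolding accretive_op_def
proof (intro allI impI)
  fix f :: "'a \<Rightarrow> complex^'r^'s"
  assume f: "square_integrable M f"
  have "L2_inner M (\<lambda>x. A f x + B f x) f = L2_inner M (A f) f + L2_inner M (B f) f"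
    using L2_inner_add_left[OF bounded_rlinear_op_square_integrable[OF A(1) f]
        bounded_rlinear_op_square_integrable[OF B(1) f] f] .
  then show "0 \<le> L2_inner M (\<lambda>x. A f x + B f x) f"
    using A(2)[unfolded accretive_op_def, rule_format, OF f]
      B(2)[unfolded accretive_op_def, rule_format, OF f] by simp
qed

section \<open>Completeness\<close>

lemma L2_dist_le_sum_increments:
  fixes s :: "nat \<Rightarrow> 'a \<Rightarrow> 'b::euclidean_space"
  assumes s: "\<And>n. square_integrable M (s n)"
  shows "sqrt (L2_sqnorm M (\<lambda>x. s (N + k) x - s N x))
    \<le> (\<Sum>n<k. sqrt (L2_sqnorm M (\<lambda>x. s (Suc (N + n)) x - s (N + n) x)))"
proof (induction k)
  case 0
  then show ?case by (simp add: L2_sqnorm_def)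
next
  case (Suc k)
  have "sqrt (L2_sqnorm M (\<lambda>x. s (N + Suc k) x - s N x))
     \<le> sqrt (L2_sqnorm M (\<lambda>x. s (Suc (N + k)) x - s (N + k) x))
        + sqrt (L2_sqnorm M (\<lambda>x. s (N + k) x - s N x))"
    using L2_dist_triangle[OF s s s] by simp
  with Suc.IH show ?case by simp
qed

lemma L2_norm_sum_norm_le:
  fixes h :: "nat \<Rightarrow> 'a \<Rightarrow> 'b::euclidean_space"
  assumes h: "\<And>n. square_integrable M (h n)"
  shows "square_integrable M (\<lambda>x. \<Sum>n<k. norm (h n x))
    \<and> sqrt (L2_sqnorm M (\<lambda>x. \<Sum>n<k. norm (h n x))) \<le> (\<Sum>n<k. sqrt (L2_sqnorm M (h n)))"
proof (induction k)
  case 0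
  then show ?case by (simp add: square_integrable_zero L2_sqnorm_def)
next
  case (Suc k)
  have "sqrt (L2_sqnorm M (\<lambda>x. \<Sum>n<Suc k. norm (h n x)))
      \<le> sqrt (L2_sqnorm M (\<lambda>x. \<Sum>n<k. norm (h n x))) + sqrt (L2_sqnorm M (h k))"
    using L2_norm_triangle[OF Suc.IH[THEN conjunct1] square_integrable_norm[OF h]]
    by (simp add: L2_sqnorm_def)
  with Suc.IH show ?case
    by (simp add: square_integrable_add square_integrable_norm h)
qed

lemma AE_summable_norm_of_bounded_L2_sums:
  fixes h :: "nat \<Rightarrow> 'a \<Rightarrow> 'b::euclidean_space"
  assumes h: "\<And>n. square_integrable M (h n)"
    and bound: "\<And>k. (\<Sum>n<k. sqrt (L2_sqnorm M (h n))) \<le> R"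
  shows "AE x in M. summable (\<lambda>n. norm (h n x))"
proof -
  define G where "G k x = (\<Sum>n<k. norm (h n x))" for k x
  have G: "square_integrable M (G k)" "sqrt (L2_sqnorm M (G k)) \<le> R" for k
    using L2_norm_sum_norm_le[where h=h and k=k, OF h] bound[of k] by (simp_all add: G_def[abs_def])
  have G_nonneg: "0 \<le> G k x" for k x
    by (simp add: G_def sum_nonneg)
  have [measurable]: "G k \<in> borel_measurable M" for k
    using G by measurable
  have "incseq (\<lambda>k x. ennreal ((G k x)\<^sup>2))"
    by (intro incseq_SucI le_funI ennreal_leI power_mono G_nonneg) (simp add: G_def)
  then have "(\<integral>\<^sup>+x. (SUP k. ennreal ((G k x)\<^sup>2)) \<partial>M) = (SUP k. \<integral>\<^sup>+x. ennreal ((G k x)\<^sup>2) \<partial>M)"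
    by (intro nn_integral_monotone_convergence_SUP) auto
  also have "\<dots> \<le> ennreal (R\<^sup>2)"
  proof (rule SUP_least)
    fix k
    have "L2_sqnorm M (G k) \<le> R\<^sup>2"
      using power_mono[OF G(2)[of k] real_sqrt_ge_zero[OF L2_sqnorm_nonneg], of 2]
      by (simp add: L2_sqnorm_nonneg)
    then show "(\<integral>\<^sup>+x. ennreal ((G k x)\<^sup>2) \<partial>M) \<le> ennreal (R\<^sup>2)"
      using nn_integral_eq_L2_sqnorm[OF G(1)] G_nonneg by (simp add: ennreal_leI)
  qed
  finally have "(\<integral>\<^sup>+x. (SUP k. ennreal ((G k x)\<^sup>2)) \<partial>M) < \<infinity>"
    by (rule order.strict_trans1) simp
  then have "AE x in M. (SUP k. ennreal ((G k x)\<^sup>2)) < \<infinity>"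
    by (rule finite_nn_integral_imp_ae_finite[rotated]) measurable
  then show ?thesis
  proof (rule eventually_mono)
    fix x assume fin: "(SUP k. ennreal ((G k x)\<^sup>2)) < \<infinity>"
    have "(G k x)\<^sup>2 \<le> enn2real (SUP k. ennreal ((G k x)\<^sup>2))" for k
    proof -
      have "ennreal ((G k x)\<^sup>2) \<le> (SUP k. ennreal ((G k x)\<^sup>2))" by (rule SUP_upper) simp
      then have "enn2real (ennreal ((G k x)\<^sup>2)) \<le> enn2real (SUP k. ennreal ((G k x)\<^sup>2))"
        using fin by (intro enn2real_mono) auto
      then show ?thesis by simp
    qed
    then show "summable (\<lambda>n. norm (h n x))"
      by (intro summableI_nonneg_bounded[where x="sqrt (enn2real (SUP k. ennreal ((G k x)\<^sup>2)))"])
        (auto simp: G_def intro: real_le_rsqrt)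
  qed
qed

lemma AE_convergent_of_bounded_L2_increments:
  fixes s :: "nat \<Rightarrow> 'a \<Rightarrow> 'b::euclidean_space"
  assumes s: "\<And>n. square_integrable M (s n)"
    and bound: "\<And>k. (\<Sum>n<k. sqrt (L2_sqnorm M (\<lambda>x. s (Suc n) x - s n x))) \<le> R"
  shows "AE x in M. convergent (\<lambda>k. s k x)"
  using AE_summable_norm_of_bounded_L2_sums[of M "\<lambda>n x. s (Suc n) x - s n x",
      OF square_integrable_diff[OF s s] bound]
proof (rule eventually_mono)
  fix x assume "summable (\<lambda>n. norm (s (Suc n) x - s n x))"
  then have "convergent (\<lambda>k. (\<Sum>n<k. s (Suc n) x - s n x) + s 0 x)"
    by (intro convergent_add convergent_const)
      (simp add: summable_iff_convergent[symmetric] summable_norm_cancel)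
  then show "convergent (\<lambda>k. s k x)"
    using sum_lessThan_telescope[of "\<lambda>n. s n x"] by simp
qed

lemma L2_sqnorm_le_of_AE_limit:
  fixes s :: "nat \<Rightarrow> 'a \<Rightarrow> 'b::euclidean_space"
  assumes s: "\<And>m. square_integrable M (s m)" and g: "square_integrable M g"
    and lim: "AE x in M. (\<lambda>m. s m x) \<longlonglongrightarrow> f x" and [measurable]: "f \<in> borel_measurable M"
    and bound: "\<forall>\<^sub>F m in sequentially. L2_sqnorm M (\<lambda>x. g x - s m x) \<le> R"
  shows "square_integrable M (\<lambda>x. g x - f x) \<and> L2_sqnorm M (\<lambda>x. g x - f x) \<le> R"
proof -
  have [measurable]: "s m \<in> borel_measurable M" for m using s by measurable
  have [measurable]: "g \<in> borel_measurable M" using g by measurable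
  have "(\<integral>\<^sup>+x. ennreal ((norm (g x - f x))\<^sup>2) \<partial>M)
      = (\<integral>\<^sup>+x. liminf (\<lambda>m. ennreal ((norm (g x - s m x))\<^sup>2)) \<partial>M)"
    using lim
    by (intro nn_integral_cong_AE, elim eventually_mono, intro lim_imp_Liminf[symmetric])
      (auto intro!: tendsto_intros)
  also have "\<dots> \<le> liminf (\<lambda>m. \<integral>\<^sup>+x. ennreal ((norm (g x - s m x))\<^sup>2) \<partial>M)"
    by (rule nn_integral_liminf) measurable
  also have "\<dots> \<le> ennreal R"
  proof (rule Liminf_le)
    show "\<forall>\<^sub>F m in sequentially. (\<integral>\<^sup>+x. ennreal ((norm (g x - s m x))\<^sup>2) \<partial>M) \<le> ennreal R"
      using bound
      by eventually_elim (simp add: nn_integral_eq_L2_sqnorm[OF square_integrable_diff[OF g s]] ennreal_leI)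
  qed simp
  finally have nn: "(\<integral>\<^sup>+x. ennreal ((norm (g x - f x))\<^sup>2) \<partial>M) \<le> ennreal R" .
  have "integrable M (\<lambda>x. (norm (g x - f x))\<^sup>2)"
  proof (rule integrableI_nonneg)
    show "(\<integral>\<^sup>+x. ennreal ((norm (g x - f x))\<^sup>2) \<partial>M) < \<infinity>"
      using nn by (rule order.strict_trans1) simp
  qed auto
  then have sq: "square_integrable M (\<lambda>x. g x - f x)"
    unfolding square_integrable_def by simp
  from bound obtain m where "L2_sqnorm M (\<lambda>x. g x - s m x) \<le> R"
    by (auto simp: eventually_sequentially)
  then have "0 \<le> R"
    using L2_sqnorm_nonneg order_trans by blast
  then show ?thesis
    using nn nn_integral_eq_L2_sqnorm[OF sq] sq by (simp add: ennreal_le_iff)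
qed

lemma L2_limit_of_geometric_Cauchy:
  fixes s :: "nat \<Rightarrow> 'a \<Rightarrow> 'b::euclidean_space"
  assumes s: "\<And>n. square_integrable M (s n)" and q: "0 \<le> q" "q < 1"
    and step: "\<And>n. sqrt (L2_sqnorm M (\<lambda>x. s (Suc n) x - s n x)) \<le> K * q ^ n"
  shows "\<exists>f. square_integrable M f \<and> (\<lambda>n. L2_sqnorm M (\<lambda>x. s n x - f x)) \<longlonglongrightarrow> 0"
proof -
  have "0 \<le> K"
    using step[of 0] real_sqrt_ge_zero[OF L2_sqnorm_nonneg] by (metis order_trans power_0 mult_1_right)
  define R where "R N = K * q ^ N / (1 - q)" for N
  have geometric_tail: "(\<Sum>n<k. K * q ^ (N + n)) \<le> R N" for N k
  proof -
    have "(\<Sum>n<k. K * q ^ (N + n)) = K * q ^ N * (\<Sum>n<k. q ^ n)"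
      by (simp add: sum_distrib_left power_add mult.assoc)
    also have "\<dots> = K * q ^ N * ((1 - q ^ k) / (1 - q))"
      using q by (simp add: geometric_sum field_simps)
    also have "\<dots> \<le> K * q ^ N * (1 / (1 - q))"
      using q \<open>0 \<le> K\<close> by (intro mult_left_mono divide_right_mono) auto
    finally show ?thesis by (simp add: R_def)
  qed
  have tail: "sqrt (L2_sqnorm M (\<lambda>x. s (N + k) x - s N x)) \<le> R N" for N k
  proof -
    have "(\<Sum>n<k. sqrt (L2_sqnorm M (\<lambda>x. s (Suc (N + n)) x - s (N + n) x))) \<le> (\<Sum>n<k. K * q ^ (N + n))"
      using step by (intro sum_mono) simp
    then show ?thesis
      using L2_dist_le_sum_increments[where s=s and N=N and k=k, OF s] geometric_tail[of N k] by linarith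
  qed
  have "(\<Sum>n<k. sqrt (L2_sqnorm M (\<lambda>x. s (Suc n) x - s n x))) \<le> R 0" for k
  proof -
    have "(\<Sum>n<k. sqrt (L2_sqnorm M (\<lambda>x. s (Suc n) x - s n x))) \<le> (\<Sum>n<k. K * q ^ (0 + n))"
      using step by (intro sum_mono) simp
    then show ?thesis using geometric_tail[of 0 k] by linarith
  qed
  then have "AE x in M. convergent (\<lambda>k. s k x)"
    by (rule AE_convergent_of_bounded_L2_increments[OF s])
  then have lim: "AE x in M. (\<lambda>k. s k x) \<longlonglongrightarrow> lim (\<lambda>k. s k x)"
    by (rule eventually_mono) (simp add: convergent_LIMSEQ_iff)
  have [measurable]: "(\<lambda>x. lim (\<lambda>k. s k x)) \<in> borel_measurable M"
    using s by measurable
  have near: "square_integrable M (\<lambda>x. s N x - lim (\<lambda>k. s k x))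
      \<and> L2_sqnorm M (\<lambda>x. s N x - lim (\<lambda>k. s k x)) \<le> (R N)\<^sup>2" for N
  proof (rule L2_sqnorm_le_of_AE_limit[OF s s lim])
    have "L2_sqnorm M (\<lambda>x. s N x - s (N + k) x) \<le> (R N)\<^sup>2" for k
      using power_mono[OF tail[of N k] real_sqrt_ge_zero[OF L2_sqnorm_nonneg], of 2]
      by (simp add: L2_sqnorm_nonneg L2_sqnorm_minus_commute)
    then show "\<forall>\<^sub>F m in sequentially. L2_sqnorm M (\<lambda>x. s N x - s m x) \<le> (R N)\<^sup>2"
      unfolding eventually_sequentially by (metis le_Suc_ex)
  qed measurable
  have "square_integrable M (\<lambda>x. lim (\<lambda>k. s k x))"
    using square_integrable_diff[OF s near[THEN conjunct1], of 0 0] by simp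
  moreover have "(\<lambda>n. L2_sqnorm M (\<lambda>x. s n x - lim (\<lambda>k. s k x))) \<longlonglongrightarrow> 0"
  proof (rule tendsto_sandwich[of "\<lambda>n. 0" _ _ "\<lambda>n. (R n)\<^sup>2"])
    have "(\<lambda>n. (K * q ^ n / (1 - q))\<^sup>2) \<longlonglongrightarrow> (K * 0 / (1 - q))\<^sup>2"
      using q by (intro tendsto_intros LIMSEQ_power_zero) auto
    then show "(\<lambda>n. (R n)\<^sup>2) \<longlonglongrightarrow> 0" by (simp add: R_def)
  qed (use near in \<open>auto simp: L2_sqnorm_nonneg\<close>)
  ultimately show ?thesis by blast
qed

section \<open>Identity plus an accretive operator\<close>

lemma bounded_rlinear_op_dist_le:
  fixes B :: "('a \<Rightarrow> complex^'r::finite^'s::finite) \<Rightarrow> ('a \<Rightarrow> complex^'r^'s)"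
  assumes B: "bounded_rlinear_op M B"
    and bound: "\<And>u. square_integrable M u \<Longrightarrow> sqrt (L2_sqnorm M (B u)) \<le> c * sqrt (L2_sqnorm M u)"
    and u: "square_integrable M u" and v: "square_integrable M v"
  shows "sqrt (L2_sqnorm M (\<lambda>x. B u x - B v x)) \<le> c * sqrt (L2_sqnorm M (\<lambda>x. u x - v x))"
proof -
  note B_sq = bounded_rlinear_op_square_integrable[OF B]
  have "L2_sqnorm M (\<lambda>x. B u x - B v x) = L2_sqnorm M (B (\<lambda>x. u x - v x))"
    by (rule L2_sqnorm_aeq[OF square_integrable_diff[OF B_sq[OF u] B_sq[OF v]]
          B_sq[OF square_integrable_diff[OF u v]] aeq_sym[OF bounded_rlinear_op_diff[OF B u v]]])
  then show ?thesis
    using bound[OF square_integrable_diff[OF u v]] by simp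
qed

lemma L2_limit_of_iterates_is_fixpoint:
  fixes B :: "('a \<Rightarrow> complex^'r::finite^'s::finite) \<Rightarrow> ('a \<Rightarrow> complex^'r^'s)"
  assumes B: "bounded_rlinear_op M B"
    and bound: "\<And>u. square_integrable M u \<Longrightarrow> sqrt (L2_sqnorm M (B u)) \<le> c * sqrt (L2_sqnorm M u)"
    and h: "square_integrable M h"
    and s: "\<And>n. square_integrable M (s n)" and s_Suc: "\<And>n. s (Suc n) = (\<lambda>x. B (s n) x + h x)"
    and f: "square_integrable M f" and lim: "(\<lambda>n. L2_sqnorm M (\<lambda>x. s n x - f x)) \<longlonglongrightarrow> 0"
  shows "aeq M f (\<lambda>x. B f x + h x)"
proof -
  define \<Phi> where "\<Phi> = (\<lambda>x. B f x + h x)"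
  have \<Phi>: "square_integrable M \<Phi>"
    unfolding \<Phi>_def by (intro square_integrable_add h bounded_rlinear_op_square_integrable[OF B f])
  have dist_le: "sqrt (L2_sqnorm M (\<lambda>x. \<Phi> x - f x))
      \<le> c * sqrt (L2_sqnorm M (\<lambda>x. s n x - f x)) + sqrt (L2_sqnorm M (\<lambda>x. s (Suc n) x - f x))" for n
  proof -
    have "sqrt (L2_sqnorm M (\<lambda>x. \<Phi> x - f x))
        \<le> sqrt (L2_sqnorm M (\<lambda>x. \<Phi> x - s (Suc n) x)) + sqrt (L2_sqnorm M (\<lambda>x. s (Suc n) x - f x))"
      by (rule L2_dist_triangle[OF \<Phi> s f])
    also have "L2_sqnorm M (\<lambda>x. \<Phi> x - s (Suc n) x) = L2_sqnorm M (\<lambda>x. B f x - B (s n) x)"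
      by (simp add: \<Phi>_def s_Suc)
    also have "sqrt \<dots> \<le> c * sqrt (L2_sqnorm M (\<lambda>x. s n x - f x))"
      using bounded_rlinear_op_dist_le[OF B bound f s] by (simp add: L2_sqnorm_minus_commute)
    finally show ?thesis by simp
  qed
  have "(\<lambda>n. c * sqrt (L2_sqnorm M (\<lambda>x. s n x - f x)) + sqrt (L2_sqnorm M (\<lambda>x. s (Suc n) x - f x)))
      \<longlonglongrightarrow> c * sqrt 0 + sqrt 0"
    using lim LIMSEQ_Suc[OF lim] by (intro tendsto_intros)
  then have "sqrt (L2_sqnorm M (\<lambda>x. \<Phi> x - f x)) \<le> c * sqrt 0 + sqrt 0"
    by (rule LIMSEQ_le_const) (use dist_le in blast)
  then have "L2_sqnorm M (\<lambda>x. \<Phi> x - f x) = 0"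
    using L2_sqnorm_nonneg[of M "\<lambda>x. \<Phi> x - f x"] by simp
  then have "AE x in M. \<Phi> x - f x = 0"
    using L2_sqnorm_eq_0_iff[OF square_integrable_diff[OF \<Phi> f]] by simp
  then show ?thesis
    unfolding aeq_def \<Phi>_def by (rule eventually_mono) simp
qed

lemma L2_contraction_fixpoint:
  fixes B :: "('a \<Rightarrow> complex^'r::finite^'s::finite) \<Rightarrow> ('a \<Rightarrow> complex^'r^'s)"
  assumes B: "bounded_rlinear_op M B" and q: "0 \<le> q" "q < 1"
    and contraction: "\<And>u. square_integrable M u \<Longrightarrow> sqrt (L2_sqnorm M (B u)) \<le> q * sqrt (L2_sqnorm M u)"
    and h: "square_integrable M h"
  shows "\<exists>f. square_integrable M f \<and> aeq M f (\<lambda>x. B f x + h x)"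
proof -
  define s where "s = rec_nat (\<lambda>x. 0) (\<lambda>n sn x. B sn x + h x)"
  have s_0: "s 0 = (\<lambda>x. 0)" and s_Suc: "s (Suc n) = (\<lambda>x. B (s n) x + h x)" for n
    by (simp_all add: s_def)
  have s: "square_integrable M (s n)" for n
    by (induction n)
      (simp_all add: s_0 s_Suc square_integrable_zero square_integrable_add h
        bounded_rlinear_op_square_integrable[OF B])
  define K where "K = sqrt (L2_sqnorm M (\<lambda>x. s (Suc 0) x - s 0 x))"
  have "sqrt (L2_sqnorm M (\<lambda>x. s (Suc n) x - s n x)) \<le> K * q ^ n" for n
  proof (induction n)
    case (Suc n)
    have "sqrt (L2_sqnorm M (\<lambda>x. s (Suc (Suc n)) x - s (Suc n) x))
        \<le> q * sqrt (L2_sqnorm M (\<lambda>x. s (Suc n) x - s n x))"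
      using bounded_rlinear_op_dist_le[OF B contraction s s, of "Suc n" n] by (simp add: s_Suc)
    also have "\<dots> \<le> q * (K * q ^ n)"
      using Suc q by (intro mult_left_mono) auto
    finally show ?case by (simp add: algebra_simps)
  qed (simp add: K_def)
  then obtain f where "square_integrable M f" "(\<lambda>n. L2_sqnorm M (\<lambda>x. s n x - f x)) \<longlonglongrightarrow> 0"
    using L2_limit_of_geometric_Cauchy[where s=s, OF s q] by blast
  then show ?thesis
    using L2_limit_of_iterates_is_fixpoint[where s=s, OF B contraction h s s_Suc] by blast
qed

lemma id_plus_accretive_inj:
  fixes A :: "('a \<Rightarrow> complex^'r::finite^'s::finite) \<Rightarrow> ('a \<Rightarrow> complex^'r^'s)"
  assumes A: "bounded_rlinear_op M A" "accretive_op M A"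
    and f: "square_integrable M f" and g: "square_integrable M g"
    and eq: "aeq M (\<lambda>x. f x + A f x) (\<lambda>x. g x + A g x)"
  shows "aeq M f g"
proof -
  define h where "h = (\<lambda>x. f x - g x)"
  have h: "square_integrable M h"
    unfolding h_def by (rule square_integrable_diff[OF f g])
  have Ah: "square_integrable M (A h)"
    by (rule bounded_rlinear_op_square_integrable[OF A(1) h])
  have "aeq M (\<lambda>x. h x + A h x) (\<lambda>x. 0)"
    using bounded_rlinear_op_diff[OF A(1) f g] eq unfolding aeq_def
  proof eventually_elim
    case (elim x)
    have "h x + A h x = (f x + A f x) - (g x + A g x)"
      by (simp only: h_def elim(1)) (simp add: algebra_simps)
    with elim(2) show ?case by simp
  qed
  then have "L2_inner M (\<lambda>x. h x + A h x) h = 0"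
    using L2_inner_aeq_left[OF square_integrable_add[OF h Ah] square_integrable_zero h]
    by (simp add: L2_inner_def)
  then have "L2_sqnorm M h + L2_inner M (A h) h = 0"
    using L2_inner_add_left[OF h Ah h] by (simp add: L2_inner_self)
  moreover have "0 \<le> L2_inner M (A h) h"
    using A(2) h by (simp add: accretive_op_def)
  ultimately have "L2_sqnorm M h = 0"
    using L2_sqnorm_nonneg[of M h] by linarith
  then show ?thesis
    unfolding aeq_def using L2_sqnorm_eq_0_iff[OF h] by (auto simp: h_def elim: eventually_mono)
qed

lemma accretive_op_damped_contraction:
  fixes A :: "('a \<Rightarrow> complex^'r::finite^'s::finite) \<Rightarrow> ('a \<Rightarrow> complex^'r^'s)"
  assumes A: "bounded_rlinear_op M A" "accretive_op M A"
    and C: "\<And>f. square_integrable M f \<Longrightarrow> sqrt (L2_sqnorm M (A f)) \<le> C * sqrt (L2_sqnorm M f)"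
    and t: "0 \<le> t" "t \<le> 1" "t * (1 + C\<^sup>2) = 1"
    and u: "square_integrable M u"
  shows "sqrt (L2_sqnorm M (\<lambda>x. (1 - t) *\<^sub>R u x + (- t) *\<^sub>R A u x)) \<le> sqrt (1 - t) * sqrt (L2_sqnorm M u)"
proof -
  have Au: "square_integrable M (A u)"
    by (rule bounded_rlinear_op_square_integrable[OF A(1) u])
  have "L2_sqnorm M (A u) \<le> C\<^sup>2 * L2_sqnorm M u"
    using power_mono[OF C[OF u] real_sqrt_ge_zero[OF L2_sqnorm_nonneg], of 2]
    by (simp add: power_mult_distrib L2_sqnorm_nonneg)
  then have A_le: "t\<^sup>2 * L2_sqnorm M (A u) \<le> t\<^sup>2 * (C\<^sup>2 * L2_sqnorm M u)"
    by (rule mult_left_mono) simp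
  have "0 \<le> L2_inner M u (A u)"
    using A(2) u by (simp add: accretive_op_def L2_inner_commute)
  then have cross: "0 \<le> 2 * ((1 - t) * t) * L2_inner M u (A u)"
    using t by simp
  have "L2_sqnorm M (\<lambda>x. (1 - t) *\<^sub>R u x + (- t) *\<^sub>R A u x)
      = (1 - t)\<^sup>2 * L2_sqnorm M u - 2 * ((1 - t) * t) * L2_inner M u (A u) + t\<^sup>2 * L2_sqnorm M (A u)"
    using L2_sqnorm_add[OF square_integrable_scaleR[OF u, of "1 - t"] square_integrable_scaleR[OF Au, of "- t"]]
    by (simp add: L2_sqnorm_scaleR L2_inner_scaleR_left L2_inner_scaleR_right del: scaleR_minus_left)
  also have "\<dots> \<le> ((1 - t)\<^sup>2 + t\<^sup>2 * C\<^sup>2) * L2_sqnorm M u"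
    using A_le cross by (simp add: algebra_simps)
  also have "(1 - t)\<^sup>2 + t\<^sup>2 * C\<^sup>2 = 1 - 2 * t + t * (t * (1 + C\<^sup>2))"
    by (simp add: power2_eq_square algebra_simps)
  also have "\<dots> = 1 - t"
    using t(3) by simp
  finally show ?thesis
    by (simp add: real_sqrt_mult[symmetric])
qed

lemma id_plus_accretive_surj:
  fixes A :: "('a \<Rightarrow> complex^'r::finite^'s::finite) \<Rightarrow> ('a \<Rightarrow> complex^'r^'s)"
  assumes A: "bounded_rlinear_op M A" "accretive_op M A" and g: "square_integrable M g"
  shows "\<exists>f. square_integrable M f \<and> aeq M (\<lambda>x. f x + A f x) g"
proof -
  obtain C where C: "\<And>f. square_integrable M f \<Longrightarrow> sqrt (L2_sqnorm M (A f)) \<le> C * sqrt (L2_sqnorm M f)"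
    and "C > 0"
    using bounded_rlinear_op_bound[OF A(1)] by blast
  define t where "t = 1 / (1 + C\<^sup>2)"
  have "0 < 1 + C\<^sup>2"
    by (simp add: add_pos_nonneg)
  then have t: "0 < t" "t < 1" "t * (1 + C\<^sup>2) = 1"
    using \<open>C > 0\<close> by (simp_all add: t_def field_simps)
  have "bounded_rlinear_op M (\<lambda>f x. (1 - t) *\<^sub>R f x + (- t) *\<^sub>R A f x)"
    by (rule bounded_rlinear_op_lincomb[OF A(1)])
  moreover have "0 \<le> sqrt (1 - t)" "sqrt (1 - t) < 1"
    using t by auto
  ultimately obtain f where f: "square_integrable M f"
    and fixpoint: "aeq M f (\<lambda>x. ((1 - t) *\<^sub>R f x + (- t) *\<^sub>R A f x) + t *\<^sub>R g x)"
    using L2_contraction_fixpoint[OF _ _ _ accretive_op_damped_contraction[OF A C]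
        square_integrable_scaleR[OF g]] t
    by fastforce
  have "aeq M (\<lambda>x. f x + A f x) g"
    using fixpoint unfolding aeq_def
  proof (rule eventually_mono)
    fix x assume "f x = ((1 - t) *\<^sub>R f x + (- t) *\<^sub>R A f x) + t *\<^sub>R g x"
    then have "t *\<^sub>R (f x + A f x) = t *\<^sub>R g x"
      by (simp add: algebra_simps)
    then show "f x + A f x = g x"
      using t by simp
  qed
  with f show ?thesis by blast
qed

lemma bijective_op_id_plus_accretive:
  assumes "bounded_linear_op M A" "accretive_op M A"
  shows "bijective_op M (\<lambda>f x. f x + A f x)"
  using id_plus_accretive_inj id_plus_accretive_surj bounded_linear_op_imp_rlinear[OF assms(1)] assms(2)
  unfolding bijective_op_def Ball_def Bex_def L2_iff_square_integrable by blast

lemma mv_riesz_basis_id_plus_accretive: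
  assumes E: "mv_onb M E"
    and A: "bounded_linear_op M A" "accretive_op M A" "adjointable M A"
  shows "mv_riesz_basis M (\<lambda>k x. E k x + A (E k) x)"
proof -
  have "adjointable M (\<lambda>f x. f x + A f x)"
    using adjointable_add[OF adjointable_id _ A(3)] A(1) by (simp add: bounded_linear_op_def)
  then show ?thesis
    unfolding mv_riesz_basis_def
    using E bounded_linear_op_add[OF bounded_linear_op_id A(1)] bijective_op_id_plus_accretive[OF A(1,2)]
    by (intro exI[of _ E] exI[of _ "\<lambda>f x. f x + A f x"]) (simp add: aeq_refl)
qed

section \<open>Products of commuting positive operators\<close>

definition positive_contraction_op ::
    "'a measure \<Rightarrow> (('a \<Rightarrow> complex^'r::finite^'s::finite) \<Rightarrow> ('a \<Rightarrow> complex^'r^'s)) \<Rightarrow> bool" where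
  "positive_contraction_op M Q \<longleftrightarrow> bounded_rlinear_op M Q \<and> symmetric_op M Q \<and> accretive_op M Q \<and>
     (\<forall>w. square_integrable M w \<longrightarrow> L2_inner M (Q w) w \<le> L2_sqnorm M w)"

context
  fixes M :: "'a measure" and Q :: "('a \<Rightarrow> complex^'r::finite^'s::finite) \<Rightarrow> ('a \<Rightarrow> complex^'r^'s)"
  assumes Q: "positive_contraction_op M Q"
begin

lemma positive_contraction_op_square_integrable:
  "square_integrable M f \<Longrightarrow> square_integrable M (Q f)"
  using Q by (simp add: positive_contraction_op_def bounded_rlinear_op_square_integrable)

lemma positive_contraction_op_symmetric:
  "square_integrable M f \<Longrightarrow> square_integrable M g \<Longrightarrow> L2_inner M (Q f) g = L2_inner M f (Q g)"
  using Q by (simp add: positive_contraction_op_def symmetric_op_def)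

lemma positive_contraction_op_nonneg: "square_integrable M f \<Longrightarrow> 0 \<le> L2_inner M (Q f) f"
  using Q by (simp add: positive_contraction_op_def accretive_op_def)

lemma positive_contraction_op_le: "square_integrable M f \<Longrightarrow> L2_inner M (Q f) f \<le> L2_sqnorm M f"
  using Q by (simp add: positive_contraction_op_def)

lemma positive_contraction_op_inner_square:
  "square_integrable M f \<Longrightarrow> L2_inner M (Q (Q f)) f = L2_sqnorm M (Q f)"
  using positive_contraction_op_symmetric[OF positive_contraction_op_square_integrable]
  by (simp add: L2_inner_self)

text \<open>With \<open>w = u - Q u\<close>, positivity of \<open>\<langle>Q w, w\<rangle>\<close> and \<open>Q \<le> I\<close> applied to \<open>Q u\<close>
  give \<open>\<parallel>Q u\<parallel>\<^sup>2 \<le> \<langle>Q u, u\<rangle>\<close>.\<close>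
lemma positive_contraction_op_sqnorm_le:
  assumes u: "square_integrable M u"
  shows "L2_sqnorm M (Q u) \<le> L2_inner M (Q u) u"
proof -
  note Q_sq = positive_contraction_op_square_integrable
  have rlin: "bounded_rlinear_op M Q" using Q by (simp add: positive_contraction_op_def)
  define w where "w = (\<lambda>x. u x - Q u x)"
  have w: "square_integrable M w"
    unfolding w_def using u by (intro square_integrable_diff Q_sq)
  have "0 \<le> L2_inner M (Q w) w"
    by (rule positive_contraction_op_nonneg[OF w])
  also have "\<dots> = L2_inner M (\<lambda>x. Q u x - Q (Q u) x) w"
    unfolding w_def
    by (rule L2_inner_aeq_left[OF Q_sq[OF w[unfolded w_def]]
          square_integrable_diff[OF Q_sq[OF u] Q_sq[OF Q_sq[OF u]]]
          w[unfolded w_def] bounded_rlinear_op_diff[OF rlin u Q_sq[OF u]]])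
  also have "\<dots> = L2_inner M (Q u) u - L2_sqnorm M (Q u) - L2_sqnorm M (Q u) + L2_inner M (Q (Q u)) (Q u)"
    using u Q_sq[OF u] Q_sq[OF Q_sq[OF u]]
    by (simp add: w_def L2_inner_diff_left L2_inner_diff_right square_integrable_diff
        positive_contraction_op_inner_square L2_inner_self)
  also have "\<dots> \<le> L2_inner M (Q u) u - L2_sqnorm M (Q u)"
    using positive_contraction_op_le[OF Q_sq[OF u]] by simp
  finally show ?thesis by simp
qed

lemma positive_contraction_op_step:
  "positive_contraction_op M (\<lambda>f x. Q f x - Q (Q f) x)"
proof -
  note Q_sq = positive_contraction_op_square_integrable
  have rlin: "bounded_rlinear_op M Q" and sym: "symmetric_op M Q"
    using Q by (simp_all add: positive_contraction_op_def)
  have form: "L2_inner M (\<lambda>x. Q w x - Q (Q w) x) w = L2_inner M (Q w) w - L2_sqnorm M (Q w)"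
    if w: "square_integrable M w" for w
    using L2_inner_diff_left[OF Q_sq[OF w] Q_sq[OF Q_sq[OF w]] w] positive_contraction_op_inner_square[OF w]
    by simp
  show ?thesis
    unfolding positive_contraction_op_def accretive_op_def
  proof (intro conjI allI impI)
    show "bounded_rlinear_op M (\<lambda>f x. Q f x - Q (Q f) x)"
      using bounded_rlinear_op_diff_ops[OF rlin bounded_rlinear_op_comp[OF rlin rlin]] .
    show "symmetric_op M (\<lambda>f x. Q f x - Q (Q f) x)"
      using symmetric_op_diff[OF rlin sym bounded_rlinear_op_comp[OF rlin rlin]
          symmetric_op_comp[OF rlin sym rlin sym aeq_refl]] .
  next
    fix w :: "'a \<Rightarrow> complex^'r^'s"
    assume "square_integrable M w"
    then show "0 \<le> L2_inner M (\<lambda>x. Q w x - Q (Q w) x) w"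
      using form positive_contraction_op_sqnorm_le by fastforce
    show "L2_inner M (\<lambda>x. Q w x - Q (Q w) x) w \<le> L2_sqnorm M w"
      using form[OF \<open>square_integrable M w\<close>] positive_contraction_op_le[OF \<open>square_integrable M w\<close>]
        L2_sqnorm_nonneg[of M "Q w"] by linarith
  qed
qed

lemma commuting_positive_contraction_op_step:
  assumes S: "bounded_rlinear_op M S"
    and comm: "\<And>w. square_integrable M w \<Longrightarrow> aeq M (S (Q w)) (Q (S w))"
    and w: "square_integrable M w"
  shows "aeq M (S (\<lambda>x. Q w x - Q (Q w) x)) (\<lambda>x. Q (S w) x - Q (Q (S w)) x)"
proof -
  note Q_sq = positive_contraction_op_square_integrable
  have rlin: "bounded_rlinear_op M Q" using Q by (simp add: positive_contraction_op_def)
  have "aeq M (S (\<lambda>x. Q w x - Q (Q w) x)) (\<lambda>x. S (Q w) x - S (Q (Q w)) x)"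
    by (rule bounded_rlinear_op_diff[OF S Q_sq[OF w] Q_sq[OF Q_sq[OF w]]])
  moreover have "aeq M (S (Q (Q w))) (Q (S (Q w)))"
    by (rule comm[OF Q_sq[OF w]])
  moreover have "aeq M (Q (S (Q w))) (Q (Q (S w)))"
    by (rule bounded_rlinear_op_cong[OF rlin bounded_rlinear_op_square_integrable[OF S Q_sq[OF w]]
          Q_sq[OF bounded_rlinear_op_square_integrable[OF S w]] comm[OF w]])
  ultimately show ?thesis
    using comm[OF w] unfolding aeq_def by eventually_elim simp
qed

lemma accretive_commuting_step_le:
  assumes S: "bounded_rlinear_op M S" "accretive_op M S"
    and comm: "\<And>w. square_integrable M w \<Longrightarrow> aeq M (S (Q w)) (Q (S w))"
    and f: "square_integrable M f"
  shows "L2_inner M (S (\<lambda>x. Q f x - Q (Q f) x)) f \<le> L2_inner M (S (Q f)) f"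
proof -
  note Q_sq = positive_contraction_op_square_integrable
    and S_sq = bounded_rlinear_op_square_integrable[OF S(1)]
  have "L2_inner M (S (\<lambda>x. Q f x - Q (Q f) x)) f = L2_inner M (\<lambda>x. S (Q f) x - S (Q (Q f)) x) f"
    by (rule L2_inner_aeq_left[OF S_sq[OF square_integrable_diff[OF Q_sq[OF f] Q_sq[OF Q_sq[OF f]]]]
          square_integrable_diff[OF S_sq[OF Q_sq[OF f]] S_sq[OF Q_sq[OF Q_sq[OF f]]]] f
          bounded_rlinear_op_diff[OF S(1) Q_sq[OF f] Q_sq[OF Q_sq[OF f]]]])
  also have "\<dots> = L2_inner M (S (Q f)) f - L2_inner M (S (Q (Q f))) f"
    by (rule L2_inner_diff_left[OF S_sq[OF Q_sq[OF f]] S_sq[OF Q_sq[OF Q_sq[OF f]]] f])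
  also have "L2_inner M (S (Q (Q f))) f = L2_inner M (Q (S (Q f))) f"
    by (rule L2_inner_aeq_left[OF S_sq[OF Q_sq[OF Q_sq[OF f]]] Q_sq[OF S_sq[OF Q_sq[OF f]]] f
          comm[OF Q_sq[OF f]]])
  also have "\<dots> = L2_inner M (S (Q f)) (Q f)"
    by (rule positive_contraction_op_symmetric[OF S_sq[OF Q_sq[OF f]] f])
  finally show ?thesis
    using S(2) Q_sq[OF f] by (simp add: accretive_op_def)
qed

end

lemma positive_contraction_op_scaled:
  fixes T :: "('a \<Rightarrow> complex^'r::finite^'s::finite) \<Rightarrow> ('a \<Rightarrow> complex^'r^'s)"
  assumes T: "bounded_rlinear_op M T" "symmetric_op M T" "accretive_op M T"
    and C: "C > 0" "\<And>f. square_integrable M f \<Longrightarrow> sqrt (L2_sqnorm M (T f)) \<le> C * sqrt (L2_sqnorm M f)"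
  shows "positive_contraction_op M (\<lambda>f x. (1 / C) *\<^sub>R T f x)"
  unfolding positive_contraction_op_def accretive_op_def
proof (intro conjI allI impI)
  show "bounded_rlinear_op M (\<lambda>f x. (1 / C) *\<^sub>R T f x)"
    using bounded_rlinear_op_lincomb[OF T(1), of 0 "1 / C"] by simp
  show "symmetric_op M (\<lambda>f x. (1 / C) *\<^sub>R T f x)"
    by (rule symmetric_op_scaleR[OF T(2)])
next
  fix w :: "'a \<Rightarrow> complex^'r^'s"
  assume w: "square_integrable M w"
  have T_sq: "square_integrable M (T w)"
    by (rule bounded_rlinear_op_square_integrable[OF T(1) w])
  show "0 \<le> L2_inner M (\<lambda>x. (1 / C) *\<^sub>R T w x) w"
    using T(3) w C(1) by (simp add: accretive_op_def L2_inner_scaleR_left)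
  have "L2_inner M (T w) w \<le> sqrt (L2_sqnorm M (T w)) * sqrt (L2_sqnorm M w)"
    using L2_inner_Cauchy_Schwarz[OF T_sq w] by (simp add: abs_le_iff)
  also have "\<dots> \<le> C * sqrt (L2_sqnorm M w) * sqrt (L2_sqnorm M w)"
    using C(2)[OF w] by (intro mult_right_mono) (simp_all add: L2_sqnorm_nonneg)
  also have "\<dots> = C * L2_sqnorm M w"
    by (simp add: mult.assoc L2_sqnorm_nonneg)
  finally show "L2_inner M (\<lambda>x. (1 / C) *\<^sub>R T w x) w \<le> L2_sqnorm M w"
    using C(1) by (simp add: L2_inner_scaleR_left field_simps)
qed

lemma positive_contraction_iter_sqnorm_tendsto_0:
  fixes P :: "nat \<Rightarrow> ('a \<Rightarrow> complex^'r::finite^'s::finite) \<Rightarrow> ('a \<Rightarrow> complex^'r^'s)"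
  assumes P: "\<And>n. positive_contraction_op M (P n)"
    and P_Suc: "\<And>n. P (Suc n) = (\<lambda>f x. P n f x - P n (P n f) x)"
    and f: "square_integrable M f"
  shows "(\<lambda>n. L2_sqnorm M (P n f)) \<longlonglongrightarrow> 0"
proof -
  note P_sq = positive_contraction_op_square_integrable[OF P]
  have telescope: "(\<Sum>k<n. L2_sqnorm M (P k f)) = L2_inner M (P 0 f) f - L2_inner M (P n f) f" for n
  proof (induction n)
    case (Suc n)
    have "L2_inner M (P (Suc n) f) f = L2_inner M (P n f) f - L2_sqnorm M (P n f)"
      unfolding P_Suc
      using L2_inner_diff_left[OF P_sq[OF f] P_sq[OF P_sq[OF f]] f]
        positive_contraction_op_inner_square[OF P f]
      by simp
    with Suc.IH show ?case by simp
  qed simp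
  have "(\<Sum>k<n. L2_sqnorm M (P k f)) \<le> L2_sqnorm M f" for n
    using telescope[of n] positive_contraction_op_nonneg[OF P f, of n]
      positive_contraction_op_le[OF P f, of 0]
    by linarith
  then have "summable (\<lambda>n. L2_sqnorm M (P n f))"
    by (intro summableI_nonneg_bounded[where x="L2_sqnorm M f"]) (simp_all add: L2_sqnorm_nonneg)
  then show ?thesis
    by (rule summable_LIMSEQ_zero)
qed

lemma accretive_comp_positive_contraction_iter:
  fixes P :: "nat \<Rightarrow> ('a \<Rightarrow> complex^'r::finite^'s::finite) \<Rightarrow> ('a \<Rightarrow> complex^'r^'s)"
  assumes S: "bounded_rlinear_op M S" "accretive_op M S"
    and P: "\<And>n. positive_contraction_op M (P n)"
    and P_Suc: "\<And>n. P (Suc n) = (\<lambda>f x. P n f x - P n (P n f) x)"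
    and comm: "\<And>n w. square_integrable M w \<Longrightarrow> aeq M (S (P n w)) (P n (S w))"
    and f: "square_integrable M f"
  shows "0 \<le> L2_inner M (S (P 0 f)) f"
proof -
  note P_sq = positive_contraction_op_square_integrable[OF P]
  obtain C where C: "\<And>g. square_integrable M g \<Longrightarrow> sqrt (L2_sqnorm M (S g)) \<le> C * sqrt (L2_sqnorm M g)"
    and "C > 0"
    using bounded_rlinear_op_bound[OF S(1)] by blast
  define a where "a n = L2_inner M (S (P n f)) f" for n
  have "a (Suc n) \<le> a n" for n
    unfolding a_def P_Suc by (rule accretive_commuting_step_le[OF P[of n] S comm[where n=n] f])
  then have "decseq a"
    by (rule decseq_SucI)
  then have a_le: "a n \<le> a 0" for n
    by (simp add: decseq_def)
  have a_ge: "- (C * sqrt (L2_sqnorm M f)) * sqrt (L2_sqnorm M (P n f)) \<le> a n" for n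
  proof -
    have "\<bar>a n\<bar> \<le> sqrt (L2_sqnorm M (S (P n f))) * sqrt (L2_sqnorm M f)"
      unfolding a_def
      by (rule L2_inner_Cauchy_Schwarz[OF bounded_rlinear_op_square_integrable[OF S(1) P_sq[OF f]] f])
    also have "\<dots> \<le> C * sqrt (L2_sqnorm M (P n f)) * sqrt (L2_sqnorm M f)"
      using C[OF P_sq[OF f]] by (intro mult_right_mono) (simp_all add: L2_sqnorm_nonneg)
    finally show ?thesis by (simp add: abs_le_iff algebra_simps)
  qed
  have "(\<lambda>n. - (C * sqrt (L2_sqnorm M f)) * sqrt (L2_sqnorm M (P n f)))
      \<longlonglongrightarrow> - (C * sqrt (L2_sqnorm M f)) * sqrt 0"
    using positive_contraction_iter_sqnorm_tendsto_0[where P=P, OF P P_Suc f] by (intro tendsto_intros)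
  then have "- (C * sqrt (L2_sqnorm M f)) * sqrt 0 \<le> a 0"
    by (rule LIMSEQ_le_const2) (use a_ge a_le order_trans in blast)
  then show ?thesis
    by (simp add: a_def)
qed

lemma accretive_comp_commuting_positive_contraction:
  fixes Q S :: "('a \<Rightarrow> complex^'r::finite^'s::finite) \<Rightarrow> ('a \<Rightarrow> complex^'r^'s)"
  assumes Q: "positive_contraction_op M Q"
    and S: "bounded_rlinear_op M S" "accretive_op M S"
    and comm: "\<And>w. square_integrable M w \<Longrightarrow> aeq M (S (Q w)) (Q (S w))"
    and f: "square_integrable M f"
  shows "0 \<le> L2_inner M (S (Q f)) f"
proof -
  define P where "P = rec_nat Q (\<lambda>n R f x. R f x - R (R f) x)"
  have P_0: "P 0 = Q" and P_Suc: "P (Suc n) = (\<lambda>f x. P n f x - P n (P n f) x)" for n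
    by (simp_all add: P_def)
  have P: "positive_contraction_op M (P n) \<and>
      (\<forall>w. square_integrable M w \<longrightarrow> aeq M (S (P n w)) (P n (S w)))" for n
  proof (induction n)
    case 0
    then show ?case
      using Q comm by (simp add: P_0)
  next
    case (Suc n)
    then have pc: "positive_contraction_op M (P n)"
      and cm: "\<And>w. square_integrable M w \<Longrightarrow> aeq M (S (P n w)) (P n (S w))"
      by auto
    show ?case
      unfolding P_Suc
      using positive_contraction_op_step[OF pc] commuting_positive_contraction_op_step[OF pc S(1) cm]
      by blast
  qed
  then have "\<And>n. positive_contraction_op M (P n)"
    and "\<And>n w. square_integrable M w \<Longrightarrow> aeq M (S (P n w)) (P n (S w))"
    by auto
  from accretive_comp_positive_contraction_iter[where P=P, OF S this(1) P_Suc this(2) f]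
  show ?thesis
    by (simp add: P_0)
qed

lemma accretive_op_comp:
  fixes T S :: "('a \<Rightarrow> complex^'r::finite^'s::finite) \<Rightarrow> ('a \<Rightarrow> complex^'r^'s)"
  assumes T: "bounded_rlinear_op M T" "symmetric_op M T" "accretive_op M T"
    and S: "bounded_rlinear_op M S" "accretive_op M S"
    and comm: "\<And>f. square_integrable M f \<Longrightarrow> aeq M (T (S f)) (S (T f))"
  shows "accretive_op M (\<lambda>f. T (S f))"
  unfolding accretive_op_def
proof (intro allI impI)
  fix f :: "'a \<Rightarrow> complex^'r^'s"
  assume f: "square_integrable M f"
  note T_sq = bounded_rlinear_op_square_integrable[OF T(1)]
    and S_sq = bounded_rlinear_op_square_integrable[OF S(1)]
  obtain C where C: "C > 0" "\<And>f. square_integrable M f \<Longrightarrow> sqrt (L2_sqnorm M (T f)) \<le> C * sqrt (L2_sqnorm M f)"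
    using bounded_rlinear_op_bound[OF T(1)] by blast
  define Q where "Q = (\<lambda>f x. (1 / C) *\<^sub>R T f x)"
  have Q: "positive_contraction_op M Q"
    unfolding Q_def by (rule positive_contraction_op_scaled[OF T C])
  have "aeq M (S (Q w)) (Q (S w))" if w: "square_integrable M w" for w
    using bounded_rlinear_op_scaleR[OF S(1) T_sq[OF w], of "1 / C"] comm[OF w]
    unfolding aeq_def Q_def by eventually_elim simp
  then have "0 \<le> L2_inner M (S (Q f)) f"
    by (rule accretive_comp_commuting_positive_contraction[OF Q S _ f])
  also have "L2_inner M (S (Q f)) f = L2_inner M (\<lambda>x. (1 / C) *\<^sub>R S (T f) x) f"
    unfolding Q_def
    by (rule L2_inner_aeq_left[OF S_sq[OF square_integrable_scaleR[OF T_sq[OF f]]]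
          square_integrable_scaleR[OF S_sq[OF T_sq[OF f]]] f bounded_rlinear_op_scaleR[OF S(1) T_sq[OF f]]])
  also have "\<dots> = (1 / C) * L2_inner M (T (S f)) f"
    using L2_inner_aeq_left[OF T_sq[OF S_sq[OF f]] S_sq[OF T_sq[OF f]] f comm[OF f]]
    by (simp add: L2_inner_scaleR_left)
  finally show "0 \<le> L2_inner M (T (S f)) f"
    using C(1) by (simp add: zero_le_divide_iff)
qed

theorem theorem3p1:
  fixes M :: "'g::{ab_group_add, metric_space} measure"
    and T S :: "('g \<Rightarrow> complex^'r^'s) \<Rightarrow> ('g \<Rightarrow> complex^'r^'s)"
    and E :: "nat \<Rightarrow> 'g \<Rightarrow> complex^'r^'s"
  assumes G: "lca_group TYPE('g)"
    and haar: "haar_measure M"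
    and T: "bounded_linear_op M T" "positive_op M T" "adjointable M T"
    and S: "bounded_linear_op M S" "positive_op M S" "adjointable M S"
    and E: "mv_onb M E"
  shows "mv_riesz_basis M (\<lambda>k x. E k x + T (E k) x)
       \<and> mv_riesz_basis M (\<lambda>k x. E k x + S (E k) x)
       \<and> mv_riesz_basis M (\<lambda>k x. E k x + T (E k) x + S (E k) x)
       \<and> ((\<forall>f \<in> L2 M. aeq M (T (S f)) (S (T f)))
            \<longrightarrow> mv_riesz_basis M (\<lambda>k x. E k x + T (S (E k)) x))"
proof -
  have rT: "bounded_rlinear_op M T" and rS: "bounded_rlinear_op M S"
    using T(1) S(1) by (simp_all add: bounded_linear_op_imp_rlinear)
  have accT: "accretive_op M T" and accS: "accretive_op M S"
    using T(1,2) S(1,2) by (simp_all add: positive_op_imp_accretive)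
  have L2_T: "\<And>f. f \<in> L2 M \<Longrightarrow> T f \<in> L2 M" and L2_S: "\<And>f. f \<in> L2 M \<Longrightarrow> S f \<in> L2 M"
    using T(1) S(1) by (simp_all add: bounded_linear_op_def)
  have "mv_riesz_basis M (\<lambda>k x. E k x + (T (E k) x + S (E k) x))"
    by (rule mv_riesz_basis_id_plus_accretive[OF E bounded_linear_op_add[OF T(1) S(1)]
          accretive_op_add[OF rT accT rS accS] adjointable_add[OF T(3) L2_T S(3) L2_S]])
  moreover have "mv_riesz_basis M (\<lambda>k x. E k x + T (S (E k)) x)"
    if "\<forall>f \<in> L2 M. aeq M (T (S f)) (S (T f))"
  proof -
    have "\<And>f. square_integrable M f \<Longrightarrow> aeq M (T (S f)) (S (T f))"
      using that by (simp add: L2_iff_square_integrable)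
    then show ?thesis
      by (rule mv_riesz_basis_id_plus_accretive[OF E bounded_linear_op_comp[OF T(1) S(1)]
            accretive_op_comp[OF rT positive_op_imp_symmetric[OF T(1,2)] accT rS accS]
            adjointable_comp[OF T(3) S(3) L2_S]])
  qed
  ultimately show ?thesis
    using mv_riesz_basis_id_plus_accretive[OF E T(1) accT T(3)]
      mv_riesz_basis_id_plus_accretive[OF E S(1) accS S(3)]
    by (simp add: add.assoc)
qed

end
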